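(* Consider the mediated advertising market described in the context, with publicly known advertiser capacities, and let $\gamma \ge 1$ be a number known to the mechanism such that $u(a) \le \gamma$ for every advertiser $a$ and $|P(m)| \le \gamma$ for every mediator $m$. Let $\tau = |S_c(P,B)|$. Then the Price by Removal Mechanism (PRM) is budget balanced, individually rational, incentive compatible, and $\left(1 - \frac{5\gamma}{\tau}\right)$-competitive.
   Context: Market model. There is a finite set $P$ of users, a finite set $M$ of mediators and a finite set $A$ of advertisers. Each user $p$ has a cost $c(p)\ge 0$. The sets $P(m)$, $m\in M$, form a partition of $P$ ($P(m)$ is the set of users of mediator $m$). Each advertiser $a$ has a positive integer capacity $u(a)$ and a value $v(a)\ge 0$. To each advertiser $a$ associate a set $B(a)$ of $u(a)$ slots, each slot $b\in B(a)$ having value $v(b)=v(a)$; $B=\bigcup_a B(a)$. For $A'\subseteq A$, $B(A')=\bigcup_{a\in A'}B(a)$; for $M'\subseteq M$, $P(M')=\bigcup_{m\in M'}P(m)$. An assignment is a set $S\subseteq P\times B$ in which every user and every slot appears in at most one pair; its gain from trade is $\mathrm{GfT}(S)=\sum_{(p,b)\in S}[v(b)-c(p)]$. If mediator $m$ receives total payment $t$, his utility is $t-\sum_{p\in P(m)\text{ assigned}}c(p)$; if advertiser $a$ is assigned $n\le u(a)$ users and pays $t$, her utility is $n\,v(a)-t$. Mechanisms and reports. The mechanism knows $M$ and $A$ but not their parameters. In this setting the capacities $u(a)$ are public; each advertiser reports a value, and each mediator reports any subset of his users together with an arbitrary cost for each reported user (and an order on them used for tie-breaking). Truthful means reporting the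 true value (advertiser) or the true set of users and their true costs (mediator). The mechanism outputs an assignment, charges advertisers and pays mediators. It is incentive compatible (IC) if truthfulness is a (weakly) dominant strategy for every advertiser and every mediator; individually rational (IR) if every truthful participant has non-negative utility; budget balanced (BB) if the total amount charged to advertisers is at least the total amount paid to mediators. It is $r$-competitive if, when all players are truthful, the gain from trade of its output is at least $r$ times the maximum gain from trade over all assignments. Tie-breaking. A fixed order $\sigma$ on mediators and advertisers, chosen independently of the reports, is used to break ties when comparing (equal as numbers) costs and values of users/slots of different players (e.g., among slots of different advertisers with equal value, the slot of the advertiser earlier in $\sigma$ is considered larger); ties among users of the same mediator are broken by the order induced by his report, and ties among slots of one advertiser arbitrarily. Thus all costs and values compared are distinct, and unless stated otherwise comparisons use this rule. Canonical assignment. For $P'\subseteq P$, $B'\subseteq B$, order the slots of $B'$ by decreasing value $b_1,b_2,\dots$ and the users of $P'$ by increasing cost $p_1,p_2,\dots$; for $1\le i\le\min\{|B'|,|P'|\}$, $S_c(P',B')$ contains $(p_i,b_i)$ iff $v(b_i)>c(p_i)$. The user (slot) "at location $i$" of $S_c(P',B')$ is $p_i$ ($b_i$). PRM (all quantities computed from reports): (1) For each mediator $m$, if $|S_c(P\setminus P(m),B)|>4\gamma$, let $p_m$ be the user at location $|S_c(P\setminus P(m),B)|-4\gamma$ of $S_c(P\setminus P(m),B)$ and $c_m=c(p_m)$; otherwise $c_m=-\infty$. (2) Let $\hat P(m)$ be the set of users of $m$ whose cost is less than $c_m$. (3) Run a VCG auction in which the items are the users of $\bigcup_m\hat P(m)$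 and the bidders are the advertisers of $A$ (advertiser $a$ has value $v(a)$ for each of up to $u(a)$ items) plus a dummy advertiser $a_d$ with value $\max_m c_m$ and capacity $\sum_m|\hat P(m)|$. (4) Charge each non-dummy advertiser her VCG payment. (5) For each user $p$ assigned by the VCG auction, pay $c_m$ to the mediator $m$ of $p$. *)

theory Defs
  imports Complex_Main
begin

text \<open>The slot B(a) of an advertiser a
  consists of the pairs (a,i) with i < u(a).  The tie-breaking order sigma on mediators and
  advertisers is given by an injective rank (smaller rank = earlier in sigma).\<close>

record ('u,'m,'a) mkt =
  Us  :: "'u set"
  Ms  :: "'m set"
  As  :: "'a set"
  med :: "'u \<Rightarrow> 'm"        \<comment> \<open>the mediator owning a user (gives the partition P(m))\<close>
  cap :: "'a \<Rightarrow> nat"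
  rnk :: "'m + 'a \<Rightarrow> nat"
  gam :: nat

definition wf_mkt :: "('u,'m,'a) mkt \<Rightarrow> bool" where
  "wf_mkt K \<longleftrightarrow> finite (Us K) \<and> finite (Ms K) \<and> finite (As K) \<and>
     (\<forall>p\<in>Us K. med K p \<in> Ms K) \<and> (\<forall>a\<in>As K. 1 \<le> cap K a) \<and>
     inj_on (rnk K) (Ms K <+> As K)"

definition usersof :: "('u,'m,'a) mkt \<Rightarrow> 'm \<Rightarrow> 'u set" where
  "usersof K m = {p \<in> Us K. med K p = m}"

definition slots :: "('u,'m,'a) mkt \<Rightarrow> 'a set \<Rightarrow> ('a \<times> nat) set" where
  "slots K A' = {(a,i). a \<in> A' \<and> i < cap K a}"

text \<open>A report profile: reported advertiser values, the set of reported users (the union of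
  the subsets reported by the mediators), their reported costs, and a tie-breaking key
  (the order each mediator reports on his own users; smaller key = earlier).\<close>

record ('u,'a) prof =
  rv :: "'a \<Rightarrow> real"
  rP :: "'u set"
  rc :: "'u \<Rightarrow> real"
  rk :: "'u \<Rightarrow> nat"

definition valid_prof :: "('u,'m,'a) mkt \<Rightarrow> ('u,'a) prof \<Rightarrow> bool" where
  "valid_prof K pr \<longleftrightarrow> (\<forall>a\<in>As K. 0 \<le> rv pr a) \<and> rP pr \<subseteq> Us K \<and>
     (\<forall>p\<in>rP pr. 0 \<le> rc pr p) \<and>
     (\<forall>m\<in>Ms K. inj_on (rk pr) (rP pr \<inter> usersof K m))"

section \<open>Tie-broken comparisons (earlier player in sigma = larger)\<close>

definition user_less :: "('u,'m,'a) mkt \<Rightarrow> ('u,'a) prof \<Rightarrow> 'u \<Rightarrow> 'u \<Rightarrow> bool" where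
  "user_less K pr p q \<longleftrightarrow> rc pr p < rc pr q \<or>
     (rc pr p = rc pr q \<and>
       ((med K p \<noteq> med K q \<and> rnk K (Inl (med K q)) < rnk K (Inl (med K p))) \<or>
        (med K p = med K q \<and> rk pr p < rk pr q)))"

fun slot_gt :: "('u,'m,'a) mkt \<Rightarrow> ('u,'a) prof \<Rightarrow> 'a \<times> nat \<Rightarrow> 'a \<times> nat \<Rightarrow> bool" where
  "slot_gt K pr (a,i) (b,j) \<longleftrightarrow> rv pr a > rv pr b \<or>
     (rv pr a = rv pr b \<and> ((a \<noteq> b \<and> rnk K (Inr a) < rnk K (Inr b)) \<or> (a = b \<and> i < j)))"

fun slot_beats_user :: "('u,'m,'a) mkt \<Rightarrow> ('u,'a) prof \<Rightarrow> 'a \<times> nat \<Rightarrow> 'u \<Rightarrow> bool" where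
  "slot_beats_user K pr (a,i) p \<longleftrightarrow> rv pr a > rc pr p \<or>
     (rv pr a = rc pr p \<and> rnk K (Inr a) < rnk K (Inl (med K p)))"

text \<open>0-based positions: users by increasing cost, slots by decreasing value.\<close>

definition upos :: "('u,'m,'a) mkt \<Rightarrow> ('u,'a) prof \<Rightarrow> 'u set \<Rightarrow> 'u \<Rightarrow> nat" where
  "upos K pr P' p = card {q \<in> P'. user_less K pr q p}"

definition spos :: "('u,'m,'a) mkt \<Rightarrow> ('u,'a) prof \<Rightarrow> ('a \<times> nat) set \<Rightarrow> 'a \<times> nat \<Rightarrow> nat" where
  "spos K pr B' b = card {b' \<in> B'. slot_gt K pr b' b}"

text \<open>The canonical assignment S_c(P',B').\<close>

definition canon :: "('u,'m,'a) mkt \<Rightarrow> ('u,'a) prof \<Rightarrow> 'u set \<Rightarrow> ('a \<times> nat) set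
    \<Rightarrow> ('u \<times> ('a \<times> nat)) set" where
  "canon K pr P' B' = {(p,b). p \<in> P' \<and> b \<in> B' \<and> upos K pr P' p = spos K pr B' b \<and>
                               slot_beats_user K pr b p}"

text \<open>The user p_m (None encodes c_m = -infinity).  Location i (1-based) is position i-1.\<close>

definition pm :: "('u,'m,'a) mkt \<Rightarrow> ('u,'a) prof \<Rightarrow> 'm \<Rightarrow> 'u option" where
  "pm K pr m =
    (let P' = rP pr - usersof K m; L = card (canon K pr P' (slots K (As K))) in
     if L > 4 * gam K then Some (THE p. p \<in> P' \<and> upos K pr P' p = L - 4 * gam K - 1)
     else None)"

definition cm :: "('u,'m,'a) mkt \<Rightarrow> ('u,'a) prof \<Rightarrow> 'm \<Rightarrow> real option" where
  "cm K pr m = map_option (rc pr) (pm K pr m)"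

definition hatP :: "('u,'m,'a) mkt \<Rightarrow> ('u,'a) prof \<Rightarrow> 'm \<Rightarrow> 'u set" where
  "hatP K pr m = (case pm K pr m of None \<Rightarrow> {}
      | Some q \<Rightarrow> {p \<in> rP pr \<inter> usersof K m. user_less K pr p q})"

definition items :: "('u,'m,'a) mkt \<Rightarrow> ('u,'a) prof \<Rightarrow> 'u set" where
  "items K pr = (\<Union>m\<in>Ms K. hatP K pr m)"

definition nitems :: "('u,'m,'a) mkt \<Rightarrow> ('u,'a) prof \<Rightarrow> nat" where
  "nitems K pr = card (items K pr)"

text \<open>Value of the dummy advertiser: max of the finite c_m (irrelevant if there are no items).\<close>

definition dval :: "('u,'m,'a) mkt \<Rightarrow> ('u,'a) prof \<Rightarrow> real" where
  "dval K pr = Max {x. \<exists>m\<in>Ms K. cm K pr m = Some x}"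

text \<open>Bidder units in the VCG auction: real slots and the dummy's units.\<close>

datatype 'a vslot = RS "'a \<times> nat" | DS nat

fun vval :: "('u,'m,'a) mkt \<Rightarrow> ('u,'a) prof \<Rightarrow> 'a vslot \<Rightarrow> real" where
  "vval K pr (RS (a,i)) = rv pr a"
| "vval K pr (DS j) = dval K pr"

text \<open>Tie-breaking in the VCG auction: as before between real slots; a real slot beats a
  dummy unit of equal value (the dummy is last in sigma).\<close>

fun vtie :: "('u,'m,'a) mkt \<Rightarrow> 'a vslot \<Rightarrow> 'a vslot \<Rightarrow> bool" where
  "vtie K (RS (a,i)) (RS (b,j)) \<longleftrightarrow> (a \<noteq> b \<and> rnk K (Inr a) < rnk K (Inr b)) \<or> (a = b \<and> i < j)"
| "vtie K (RS x) (DS j) \<longleftrightarrow> True"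
| "vtie K (DS j) (RS x) \<longleftrightarrow> False"
| "vtie K (DS i) (DS j) \<longleftrightarrow> i < j"

definition vgt :: "('u,'m,'a) mkt \<Rightarrow> ('u,'a) prof \<Rightarrow> 'a vslot \<Rightarrow> 'a vslot \<Rightarrow> bool" where
  "vgt K pr x y \<longleftrightarrow> vval K pr x > vval K pr y \<or> (vval K pr x = vval K pr y \<and> vtie K x y)"

definition xall :: "('u,'m,'a) mkt \<Rightarrow> ('u,'a) prof \<Rightarrow> 'a vslot set" where
  "xall K pr = RS ` slots K (As K) \<union> DS ` {..<nitems K pr}"

definition vpos :: "('u,'m,'a) mkt \<Rightarrow> ('u,'a) prof \<Rightarrow> 'a vslot \<Rightarrow> nat" where
  "vpos K pr x = card {y \<in> xall K pr. vgt K pr y x}"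

definition winners :: "('u,'m,'a) mkt \<Rightarrow> ('u,'a) prof \<Rightarrow> 'a vslot set" where
  "winners K pr = {x \<in> xall K pr. vpos K pr x < nitems K pr}"

definition optw :: "('u,'m,'a) mkt \<Rightarrow> ('u,'a) prof \<Rightarrow> 'a vslot set \<Rightarrow> real" where
  "optw K pr Y = Max ((\<lambda>Z. \<Sum>z\<in>Z. vval K pr z) ` {Z. Z \<subseteq> Y \<and> card Z \<le> nitems K pr})"

definition nwin :: "('u,'m,'a) mkt \<Rightarrow> ('u,'a) prof \<Rightarrow> 'a \<Rightarrow> nat" where
  "nwin K pr a = card {i. RS (a,i) \<in> winners K pr}"

text \<open>VCG (Clarke pivot) payment of a real advertiser.\<close>

definition charge :: "('u,'m,'a) mkt \<Rightarrow> ('u,'a) prof \<Rightarrow> 'a \<Rightarrow> real" where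
  "charge K pr a = optw K pr (xall K pr - RS ` slots K {a})
                   - (optw K pr (xall K pr) - real (nwin K pr a) * rv pr a)"

definition assign :: "('u,'m,'a) mkt \<Rightarrow> ('u,'a) prof \<Rightarrow> ('u \<times> ('a \<times> nat)) set" where
  "assign K pr = {(p,b). p \<in> items K pr \<and> RS b \<in> winners K pr \<and>
                         upos K pr (items K pr) p = vpos K pr (RS b)}"

definition assigned_users :: "('u,'m,'a) mkt \<Rightarrow> ('u,'a) prof \<Rightarrow> 'm \<Rightarrow> 'u set" where
  "assigned_users K pr m = usersof K m \<inter> fst ` assign K pr"

definition pay :: "('u,'m,'a) mkt \<Rightarrow> ('u,'a) prof \<Rightarrow> 'm \<Rightarrow> real" where
  "pay K pr m = (case cm K pr m of None \<Rightarrow> 0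
                   | Some x \<Rightarrow> x * real (card (assigned_users K pr m)))"

definition med_util :: "('u,'m,'a) mkt \<Rightarrow> ('u \<Rightarrow> real) \<Rightarrow> ('u,'a) prof \<Rightarrow> 'm \<Rightarrow> real" where
  "med_util K c pr m = pay K pr m - (\<Sum>p\<in>assigned_users K pr m. c p)"

definition adv_util :: "('u,'m,'a) mkt \<Rightarrow> ('a \<Rightarrow> real) \<Rightarrow> ('u,'a) prof \<Rightarrow> 'a \<Rightarrow> real" where
  "adv_util K v pr a =
     real (card {x \<in> assign K pr. fst (snd x) = a}) * v a - charge K pr a"

definition truthful_med :: "('u,'m,'a) mkt \<Rightarrow> ('u \<Rightarrow> real) \<Rightarrow> ('u,'a) prof \<Rightarrow> 'm \<Rightarrow> bool" where
  "truthful_med K c pr m \<longleftrightarrow> rP pr \<inter> usersof K m = usersof K m \<and>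
     (\<forall>p\<in>usersof K m. rc pr p = c p)"

definition truthful_adv :: "('a \<Rightarrow> real) \<Rightarrow> ('u,'a) prof \<Rightarrow> 'a \<Rightarrow> bool" where
  "truthful_adv v pr a \<longleftrightarrow> rv pr a = v a"

definition others_same_med :: "('u,'m,'a) mkt \<Rightarrow> ('u,'a) prof \<Rightarrow> ('u,'a) prof \<Rightarrow> 'm \<Rightarrow> bool" where
  "others_same_med K pr pr' m \<longleftrightarrow> rv pr' = rv pr \<and>
     (\<forall>p\<in>Us K. med K p \<noteq> m \<longrightarrow> (p \<in> rP pr' \<longleftrightarrow> p \<in> rP pr) \<and>
        (p \<in> rP pr \<longrightarrow> rc pr' p = rc pr p \<and> rk pr' p = rk pr p))"

definition others_same_adv :: "('u,'a) prof \<Rightarrow> ('u,'a) prof \<Rightarrow> 'a \<Rightarrow> bool" where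
  "others_same_adv pr pr' a \<longleftrightarrow> rP pr' = rP pr \<and> rc pr' = rc pr \<and> rk pr' = rk pr \<and>
     (\<forall>b. b \<noteq> a \<longrightarrow> rv pr' b = rv pr b)"

definition is_assignment :: "('u,'m,'a) mkt \<Rightarrow> ('u \<times> ('a \<times> nat)) set \<Rightarrow> bool" where
  "is_assignment K S \<longleftrightarrow> S \<subseteq> Us K \<times> slots K (As K) \<and>
     (\<forall>x\<in>S. \<forall>y\<in>S. (fst x = fst y \<longrightarrow> x = y) \<and> (snd x = snd y \<longrightarrow> x = y))"

definition gft :: "('u \<Rightarrow> real) \<Rightarrow> ('a \<Rightarrow> real) \<Rightarrow> ('u \<times> ('a \<times> nat)) set \<Rightarrow> real" where
  "gft c v S = (\<Sum>x\<in>S. v (fst (snd x)) - c (fst x))"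

definition opt_gft :: "('u,'m,'a) mkt \<Rightarrow> ('u \<Rightarrow> real) \<Rightarrow> ('a \<Rightarrow> real) \<Rightarrow> real" where
  "opt_gft K c v = Max (gft c v ` {S. is_assignment K S})"

definition budget_balanced where
  "budget_balanced K \<longleftrightarrow> (\<forall>pr. valid_prof K pr \<longrightarrow>
     (\<Sum>m\<in>Ms K. pay K pr m) \<le> (\<Sum>a\<in>As K. charge K pr a))"

definition individually_rational where
  "individually_rational K c v \<longleftrightarrow>
     (\<forall>pr a. valid_prof K pr \<and> a \<in> As K \<and> truthful_adv v pr a \<longrightarrow> 0 \<le> adv_util K v pr a) \<and>
     (\<forall>pr m. valid_prof K pr \<and> m \<in> Ms K \<and> truthful_med K c pr m \<longrightarrow> 0 \<le> med_util K c pr m)"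

definition incentive_compatible where
  "incentive_compatible K c v \<longleftrightarrow>
     (\<forall>pr pr' a. valid_prof K pr \<and> valid_prof K pr' \<and> a \<in> As K \<and> truthful_adv v pr a \<and>
        others_same_adv pr pr' a \<longrightarrow> adv_util K v pr' a \<le> adv_util K v pr a) \<and>
     (\<forall>pr pr' m. valid_prof K pr \<and> valid_prof K pr' \<and> m \<in> Ms K \<and> truthful_med K c pr m \<and>
        others_same_med K pr pr' m \<longrightarrow> med_util K c pr' m \<le> med_util K c pr m)"

definition competitive where
  "competitive K c v r \<longleftrightarrow> (\<forall>pr. valid_prof K pr \<and> (\<forall>m\<in>Ms K. truthful_med K c pr m) \<and>
     (\<forall>a\<in>As K. truthful_adv v pr a) \<longrightarrow> r pr * opt_gft K c v \<le> gft c v (assign K pr))"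

end

theory Submission
  imports Defs "HOL-Library.Product_Lexorder"
begin

text \<open>
  A user of mediator m is paid the threshold c_m, which depends only on the other mediators'
  reports, and is traded only if it is cheaper than c_m: the mediator cannot influence his price,
  only which of his users are sold at it, so truthfulness is optimal for him.
  The threshold sits 4\<gamma> positions before the end of the canonical assignment without m, and
  removing the at most \<gamma> users of one mediator or changing the bid of one advertiser (at most
  \<gamma> slots) moves that end by at most \<gamma>. Hence at least 3\<gamma> + 1 more slots than items are
  worth at least max c_m: the dummy advertiser never wins, every winner pays at least max c_m per
  item (budget balance), and an advertiser whose bid moves a threshold either wins nothing or faces
  enough competing slots worth her value that her VCG payment covers it (incentive compatibility
  on top of VCG). Finally the \<tau> - 5\<gamma> cheapest users are all items and are traded with the
  \<tau> - 5\<gamma> most valuable slots; the gains along the canonical assignment decrease, so these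
  pairs carry a fraction 1 - 5\<gamma>/\<tau> of its gain, which bounds the optimal gain from trade.
\<close>

section \<open>Ranks with respect to a key\<close>

definition key_rank :: "('x \<Rightarrow> 'k::linorder) \<Rightarrow> 'x set \<Rightarrow> 'x \<Rightarrow> nat" where
  "key_rank f S x = card {y\<in>S. f y < f x}"

lemma key_rank_less:
  assumes "finite S" "x \<in> S" "y \<in> S" "f x < f y"
  shows "key_rank f S x < key_rank f S y"
proof -
  have "{z\<in>S. f z < f x} \<subset> {z\<in>S. f z < f y}" using assms by auto
  then show ?thesis unfolding key_rank_def by (intro psubset_card_mono) (use assms in auto)
qed

lemma key_rank_mono:
  assumes "finite S" "f x \<le> f y"
  shows "key_rank f S x \<le> key_rank f S y"
  unfolding key_rank_def using assms by (intro card_mono) auto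

lemma key_rank_less_iff:
  assumes "finite S" "x \<in> S" "y \<in> S"
  shows "key_rank f S x < key_rank f S y \<longleftrightarrow> f x < f y"
  using key_rank_less[OF assms] key_rank_mono[OF assms(1), of f y x] by (meson leD not_le_imp_less)

lemma key_rank_eq_iff:
  assumes "finite S" "inj_on f S" "x \<in> S" "y \<in> S"
  shows "key_rank f S x = key_rank f S y \<longleftrightarrow> x = y"
proof
  assume h: "key_rank f S x = key_rank f S y"
  have "\<not> f x < f y" "\<not> f y < f x"
    using key_rank_less[OF assms(1,3,4), of f] key_rank_less[OF assms(1,4,3), of f] h by auto
  then show "x = y" using inj_onD[OF assms(2)] assms(3,4) by fastforce
qed simp

lemma inj_on_key_rank: "finite S \<Longrightarrow> inj_on f S \<Longrightarrow> inj_on (key_rank f S) S"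
  by (meson inj_onI key_rank_eq_iff)

lemma key_rank_less_card:
  assumes "finite S" "x \<in> S"
  shows "key_rank f S x < card S"
proof -
  have "{y\<in>S. f y < f x} \<subset> S" using assms by auto
  then show ?thesis unfolding key_rank_def using assms psubset_card_mono by blast
qed

lemma key_rank_image:
  assumes "finite S" "inj_on f S"
  shows "key_rank f S ` S = {..<card S}"
proof -
  have "key_rank f S ` S \<subseteq> {..<card S}" using key_rank_less_card assms by auto
  moreover have "card (key_rank f S ` S) = card S" using card_image inj_on_key_rank assms by blast
  ultimately show ?thesis by (simp add: card_subset_eq)
qed

lemma key_rank_surj:
  assumes "finite S" "inj_on f S" "i < card S"
  shows "\<exists>x\<in>S. key_rank f S x = i"
  using key_rank_image[OF assms(1,2)] assms(3) by (metis imageE lessThan_iff)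

lemma key_rank_ex1:
  assumes "finite S" "inj_on f S" "i < card S"
  shows "\<exists>!x. x\<in>S \<and> key_rank f S x = i"
  using key_rank_surj[OF assms] key_rank_eq_iff[OF assms(1,2)] by blast

lemma key_rank_subset_le:
  assumes "finite S" "T \<subseteq> S"
  shows "key_rank f T x \<le> key_rank f S x"
  unfolding key_rank_def using assms by (intro card_mono) auto

lemma key_rank_le_subset_plus:
  assumes "finite S" "T \<subseteq> S"
  shows "key_rank f S x \<le> key_rank f T x + card (S - T)"
proof -
  have "{y\<in>S. f y < f x} \<subseteq> {y\<in>T. f y < f x} \<union> (S - T)" using assms by auto
  then have "card {y\<in>S. f y < f x} \<le> card ({y\<in>T. f y < f x} \<union> (S - T))"
    using assms by (intro card_mono) (auto intro: finite_subset)
  also have "\<dots> \<le> card {y\<in>T. f y < f x} + card (S - T)" by (rule card_Un_le)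
  finally show ?thesis unfolding key_rank_def .
qed

lemma key_rank_cong_downset:
  assumes "T \<subseteq> S" "\<And>y. y \<in> S \<Longrightarrow> f y < f x \<Longrightarrow> y \<in> T"
  shows "key_rank f T x = key_rank f S x"
  unfolding key_rank_def using assms by (intro arg_cong[where f=card]) auto

lemma card_key_rank_less:
  assumes "finite S" "inj_on f S" "k \<le> card S"
  shows "card {x\<in>S. key_rank f S x < k} = k"
proof -
  have "key_rank f S ` {x\<in>S. key_rank f S x < k} = {..<k}"
    using key_rank_image[OF assms(1,2)] assms(3) by (auto simp: image_iff)
  moreover have "inj_on (key_rank f S) {x\<in>S. key_rank f S x < k}"
    using inj_on_key_rank[OF assms(1,2)] by (rule inj_on_subset) auto
  ultimately show ?thesis by (metis card_image card_lessThan)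
qed

lemma sum_le_sum_inj_image:
  fixes w :: "'x \<Rightarrow> real"
  assumes fin: "finite B" and h: "h ` A \<subseteq> B" "inj_on h A"
    and le: "\<And>x. x \<in> A \<Longrightarrow> w x \<le> w (h x)"
    and alt: "card A = card B \<or> (\<forall>y\<in>B. 0 \<le> w y)"
  shows "sum w A \<le> sum w B"
proof -
  have "sum w A \<le> sum (w \<circ> h) A" using le by (intro sum_mono) auto
  also have "\<dots> = sum w (h ` A)" using sum.reindex[OF h(2), of w] by simp
  also have "\<dots> \<le> sum w B"
  proof (cases "card A = card B")
    case True
    then have "h ` A = B" using h fin card_image by (metis card_subset_eq)
    then show ?thesis by simp
  next
    case False
    then show ?thesis using alt h(1) fin by (intro sum_mono2) auto
  qed
  finally show ?thesis .
qed

text \<open>Exchange argument: elements of Z outside the top k are traded injectively for heavier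
  top-k elements outside Z.\<close>

lemma sum_le_sum_top_ranked:
  fixes w :: "'x \<Rightarrow> real"
  assumes fin: "finite S" and inj: "inj_on f S"
    and anti: "\<And>x y. x \<in> S \<Longrightarrow> y \<in> S \<Longrightarrow> f x < f y \<Longrightarrow> w y \<le> w x"
    and Z: "Z \<subseteq> S" "card Z \<le> k" and k: "k \<le> card S"
    and alt: "card Z = k \<or> (\<forall>x\<in>S. 0 \<le> w x)"
  shows "sum w Z \<le> sum w {x\<in>S. key_rank f S x < k}"
proof -
  define T where "T = {x\<in>S. key_rank f S x < k}"
  have cT: "card T = k" unfolding T_def using card_key_rank_less[OF fin inj k] .
  have finZ: "finite Z" and finT: "finite T" using Z fin finite_subset T_def by auto
  have c1: "card Z = card (Z \<inter> T) + card (Z - T)" using card_Int_Diff[OF finZ] .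
  have c2: "card T = card (Z \<inter> T) + card (T - Z)"
    using card_Int_Diff[OF finT, of Z] by (simp add: inf_commute)
  obtain h where h: "h ` (Z - T) \<subseteq> T - Z" "inj_on h (Z - T)"
    using card_le_inj[of "Z - T" "T - Z"] finZ finT c1 c2 cT Z(2) by auto
  have "w z \<le> w (h z)" if z: "z \<in> Z - T" for z
  proof -
    have hz: "h z \<in> S" "key_rank f S (h z) < k" and zS: "z \<in> S" "\<not> key_rank f S z < k"
      using h z Z T_def by auto
    then have "f (h z) < f z" using key_rank_less_iff[OF fin hz(1) zS(1), of f] by simp
    then show ?thesis using anti[OF hz(1) zS(1)] by simp
  qed
  then have "sum w (Z - T) \<le> sum w (T - Z)"
    using sum_le_sum_inj_image[OF _ h] finT alt c1 c2 cT T_def by auto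
  moreover have "sum w Z = sum w (Z \<inter> T) + sum w (Z - T)" using finZ by (metis sum.Int_Diff)
  moreover have "sum w T = sum w (Z \<inter> T) + sum w (T - Z)"
    using sum.Int_Diff[OF finT, of w Z] by (simp add: Int_commute)
  ultimately show ?thesis unfolding T_def[symmetric] by linarith
qed

lemma nonincreasing_prefix_mean_ge:
  fixes f :: "nat \<Rightarrow> real"
  assumes anti: "\<And>i j. i \<le> j \<Longrightarrow> j < n \<Longrightarrow> f j \<le> f i" and k: "k \<le> n"
  shows "real k * sum f {..<n} \<le> real n * sum f {..<k}"
proof (cases "k = n")
  case False
  then have kn: "k < n" using k by simp
  define A where "A = sum f {..<k}"
  define R where "R = sum f {k..<n}"
  have split: "sum f {..<n} = A + R"
    unfolding A_def R_def using sum.atLeastLessThan_concat[of 0 k n f] k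
    by (simp add: atLeast0LessThan)
  have A: "real k * f k \<le> A"
    using sum_bounded_below[of "{..<k}" "f k" f] anti kn A_def by simp
  have R: "R \<le> real (n - k) * f k"
    using sum_bounded_above[of "{k..<n}" f "f k"] anti R_def by simp
  have "real k * R \<le> real k * (real (n - k) * f k)" using R by (intro mult_left_mono) auto
  also have "\<dots> = real (n - k) * (real k * f k)" by simp
  also have "\<dots> \<le> real (n - k) * A" using A by (intro mult_left_mono) auto
  finally have "real k * R \<le> real (n - k) * A" .
  then show ?thesis unfolding split A_def[symmetric] using k
    by (simp add: algebra_simps of_nat_diff)
qed simp

lemma sum_le_sum_containing_positives:
  fixes f :: "'x \<Rightarrow> real"
  assumes fin: "finite U" and sub: "H' \<subseteq> U" "H \<subseteq> U"
    and pos: "{x\<in>U. 0 < f x} \<subseteq> H" and nonneg: "\<And>x. x \<in> H \<Longrightarrow> 0 \<le> f x"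
  shows "sum f H' \<le> sum f H"
proof -
  have finH': "finite H'" using fin sub(1) finite_subset by blast
  have "sum f H' = sum f (H' \<inter> {x. 0 < f x}) + sum f (H' - {x. 0 < f x})"
    using sum.Int_Diff[OF finH'] by blast
  also have "sum f (H' - {x. 0 < f x}) \<le> 0" by (intro sum_nonpos) auto
  also have "sum f (H' \<inter> {x. 0 < f x}) \<le> sum f {x\<in>U. 0 < f x}"
    using sub(1) fin by (intro sum_mono2) auto
  also have "\<dots> \<le> sum f H"
    using pos sub(2) fin nonneg by (intro sum_mono2) (auto intro: finite_subset)
  finally show ?thesis by simp
qed

lemma fst_le_of_lex_le: "(x::'x::linorder \<times> 'y::linorder) \<le> y \<Longrightarrow> fst x \<le> fst y"
  unfolding less_eq_prod_def by auto

lemma finite_slots: "finite A' \<Longrightarrow> finite (slots K A')"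
proof -
  assume "finite A'"
  have "slots K A' = (\<Union>a\<in>A'. {a} \<times> {..<cap K a})" unfolding slots_def by auto
  then show ?thesis using \<open>finite A'\<close> by auto
qed

locale prm_market =
  fixes K :: "('u,'m,'a) mkt"
  assumes wf: "wf_mkt K"
    and cap_le_gamma: "\<forall>a\<in>As K. cap K a \<le> gam K"
    and card_usersof_le_gamma: "\<forall>m\<in>Ms K. card (usersof K m) \<le> gam K"
begin

abbreviation "all_slots \<equiv> slots K (As K)"
abbreviation "\<gamma> \<equiv> gam K"

lemma finite_users: "finite (Us K)" and finite_mediators: "finite (Ms K)"
  and finite_advertisers: "finite (As K)"
  and med_in_mediators: "p \<in> Us K \<Longrightarrow> med K p \<in> Ms K"
  using wf unfolding wf_mkt_def by auto

lemma finite_all_slots: "finite all_slots" using finite_slots finite_advertisers by blast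

lemma rnk_Inl_inj: "m \<in> Ms K \<Longrightarrow> m' \<in> Ms K \<Longrightarrow> rnk K (Inl m) = rnk K (Inl m') \<Longrightarrow> m = m'"
  using wf unfolding wf_mkt_def inj_on_def by auto

lemma rnk_Inr_inj: "a \<in> As K \<Longrightarrow> a' \<in> As K \<Longrightarrow> rnk K (Inr a) = rnk K (Inr a') \<Longrightarrow> a = a'"
  using wf unfolding wf_mkt_def inj_on_def by auto

lemma mem_all_slots_iff: "b \<in> all_slots \<longleftrightarrow> fst b \<in> As K \<and> snd b < cap K (fst b)"
  unfolding slots_def by (cases b) auto

lemma usersof_subset: "usersof K m \<subseteq> Us K" unfolding usersof_def by auto
lemma finite_usersof: "finite (usersof K m)" using finite_users usersof_subset finite_subset
  by blast

text \<open>The tie-broken orders of the mechanism are the lexicographic orders on these keys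
  (smaller key: cheaper user, more valuable slot or auction unit).\<close>

definition user_key :: "('u,'a) prof \<Rightarrow> 'u \<Rightarrow> real \<times> int \<times> nat" where
  "user_key pr p = (rc pr p, - int (rnk K (Inl (med K p))), rk pr p)"

definition slot_key :: "('u,'a) prof \<Rightarrow> 'a \<times> nat \<Rightarrow> real \<times> nat \<times> nat" where
  "slot_key pr b = (- rv pr (fst b), rnk K (Inr (fst b)), snd b)"

definition unit_key :: "('u,'a) prof \<Rightarrow> 'a vslot \<Rightarrow> real \<times> nat \<times> nat \<times> nat" where
  "unit_key pr x = (case x of RS b \<Rightarrow> (- rv pr (fst b), 0, rnk K (Inr (fst b)), snd b)
                        | DS j \<Rightarrow> (- dval K pr, 1, 0, j))"

lemma rc_le_of_user_key_le: "user_key pr q \<le> user_key pr p \<Longrightarrow> rc pr q \<le> rc pr p"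
  using fst_le_of_lex_le[of "user_key pr q" "user_key pr p"] unfolding user_key_def by simp

lemma rv_le_of_slot_key_le: "slot_key pr b \<le> slot_key pr b' \<Longrightarrow> rv pr (fst b') \<le> rv pr (fst b)"
  using fst_le_of_lex_le[of "slot_key pr b" "slot_key pr b'"] unfolding slot_key_def by simp

lemma user_less_iff:
  assumes "p \<in> Us K" "q \<in> Us K"
  shows "user_less K pr p q \<longleftrightarrow> user_key pr p < user_key pr q"
proof -
  have e: "rnk K (Inl (med K p)) = rnk K (Inl (med K q)) \<longleftrightarrow> med K p = med K q"
    using rnk_Inl_inj[OF med_in_mediators[OF assms(1)] med_in_mediators[OF assms(2)]] by auto
  have k: "user_key pr p < user_key pr q \<longleftrightarrow> rc pr p < rc pr q \<or> rc pr p = rc pr q \<and>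
     (rnk K (Inl (med K q)) < rnk K (Inl (med K p)) \<or>
      rnk K (Inl (med K q)) = rnk K (Inl (med K p)) \<and> rk pr p < rk pr q)"
    unfolding user_key_def by auto
  show ?thesis unfolding k user_less_def using e by (cases "med K p = med K q") auto
qed

lemma slot_gt_iff:
  assumes "b \<in> all_slots" "b' \<in> all_slots"
  shows "slot_gt K pr b b' \<longleftrightarrow> slot_key pr b < slot_key pr b'"
proof -
  obtain a i a' j where b: "b = (a,i)" "b' = (a',j)" by (cases b, cases b')
  have e: "rnk K (Inr a) = rnk K (Inr a') \<longleftrightarrow> a = a'"
    using rnk_Inr_inj assms b mem_all_slots_iff by fastforce
  have k: "slot_key pr b < slot_key pr b' \<longleftrightarrow> rv pr a > rv pr a' \<or> rv pr a = rv pr a' \<and>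
     (rnk K (Inr a) < rnk K (Inr a') \<or> rnk K (Inr a) = rnk K (Inr a') \<and> i < j)"
    unfolding b slot_key_def by auto
  have "slot_gt K pr b b' \<longleftrightarrow> rv pr a > rv pr a' \<or> rv pr a = rv pr a' \<and>
     (rnk K (Inr a) < rnk K (Inr a') \<or> rnk K (Inr a) = rnk K (Inr a') \<and> i < j)"
    unfolding b slot_gt.simps using e by (cases "a = a'") auto
  then show ?thesis using k by simp
qed

lemma mem_xall_iff:
  "x \<in> xall K pr \<longleftrightarrow> (\<exists>b. x = RS b \<and> b \<in> all_slots) \<or> (\<exists>j. x = DS j \<and> j < nitems K pr)"
  unfolding xall_def by auto

lemma vgt_iff:
  assumes "x \<in> xall K pr" "y \<in> xall K pr"
  shows "vgt K pr x y \<longleftrightarrow> unit_key pr x < unit_key pr y"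
proof -
  have e: "rnk K (Inr (fst b)) = rnk K (Inr (fst b')) \<longleftrightarrow> fst b = fst b'" if "b \<in> all_slots"
    "b' \<in> all_slots" for b b'
    using rnk_Inr_inj[of "fst b" "fst b'"] that mem_all_slots_iff by auto
  show ?thesis
  proof (cases x)
    case (RS b)
    then obtain a i where b: "x = RS (a,i)" by (cases b) auto
    show ?thesis
    proof (cases y)
      case (RS b')
      then obtain a' j where b': "y = RS (a',j)" by (cases b') auto
      have "(a,i) \<in> all_slots" "(a',j) \<in> all_slots" using assms b b' mem_xall_iff by auto
      then have "rnk K (Inr a) = rnk K (Inr a') \<longleftrightarrow> a = a'"
        using e[of "(a,i)" "(a',j)"] by auto
      then show ?thesis unfolding b b' vgt_def unit_key_def by (cases "a = a'") auto
    next
      case (DS j)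
      then show ?thesis unfolding b vgt_def unit_key_def by auto
    qed
  next
    case (DS i)
    show ?thesis
    proof (cases y)
      case (RS b')
      then obtain a' j where b': "y = RS (a',j)" by (cases b') auto
      then show ?thesis unfolding DS b' vgt_def unit_key_def by auto
    next
      case (DS j)
      then show ?thesis unfolding \<open>x = DS i\<close> vgt_def unit_key_def by auto
    qed
  qed
qed

lemma reported_subset_users: "valid_prof K pr \<Longrightarrow> rP pr \<subseteq> Us K"
  unfolding valid_prof_def by auto
lemma finite_reported: "valid_prof K pr \<Longrightarrow> finite (rP pr)"
  using reported_subset_users finite_users finite_subset by blast

lemma inj_on_user_key:
  assumes "valid_prof K pr"
  shows "inj_on (user_key pr) (rP pr)"
proof (rule inj_onI)
  fix p q assume p: "p \<in> rP pr" and q: "q \<in> rP pr" and eq: "user_key pr p = user_key pr q"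
  have pu: "p \<in> Us K" "q \<in> Us K" using p q reported_subset_users assms by auto
  have "rnk K (Inl (med K p)) = rnk K (Inl (med K q))" "rk pr p = rk pr q"
    using eq unfolding user_key_def by auto
  then have m: "med K p = med K q" using rnk_Inl_inj med_in_mediators pu by blast
  have "inj_on (rk pr) (rP pr \<inter> usersof K (med K p))"
    using assms med_in_mediators pu unfolding valid_prof_def by blast
  moreover have "p \<in> rP pr \<inter> usersof K (med K p)" "q \<in> rP pr \<inter> usersof K (med K p)"
    using p q pu m unfolding usersof_def by auto
  ultimately show "p = q" using \<open>rk pr p = rk pr q\<close> inj_onD by metis
qed

lemma inj_on_user_key_subset: "valid_prof K pr \<Longrightarrow> P' \<subseteq> rP pr \<Longrightarrow> inj_on (user_key pr) P'"
  using inj_on_user_key inj_on_subset by blast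

lemma inj_on_slot_key: "inj_on (slot_key pr) all_slots"
proof (rule inj_onI)
  fix b b' assume "b \<in> all_slots" "b' \<in> all_slots" "slot_key pr b = slot_key pr b'"
  then show "b = b'" unfolding slot_key_def using rnk_Inr_inj mem_all_slots_iff
    by (cases b, cases b') auto
qed

lemma inj_on_unit_key: "inj_on (unit_key pr) (xall K pr)"
proof (rule inj_onI)
  fix x y assume x: "x \<in> xall K pr" and y: "y \<in> xall K pr" and eq: "unit_key pr x = unit_key pr y"
  show "x = y"
  proof (cases x)
    case (RS b)
    show ?thesis
    proof (cases y)
      case (RS b')
      have bs: "b \<in> all_slots" "b' \<in> all_slots"
        using x y \<open>x = RS b\<close> RS mem_xall_iff by auto
      have "rnk K (Inr (fst b)) = rnk K (Inr (fst b'))" "snd b = snd b'"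
        using eq \<open>x = RS b\<close> RS unfolding unit_key_def by auto
      then have "fst b = fst b'" using rnk_Inr_inj bs mem_all_slots_iff by blast
      then show ?thesis using \<open>snd b = snd b'\<close> \<open>x = RS b\<close> RS
        by (simp add: prod_eq_iff)
    next
      case (DS j)
      then show ?thesis using eq \<open>x = RS b\<close> unfolding unit_key_def by auto
    qed
  next
    case (DS i)
    then show ?thesis using eq unfolding unit_key_def by (cases y) auto
  qed
qed

lemma finite_xall: "finite (xall K pr)" unfolding xall_def using finite_all_slots by auto

lemma upos_eq_key_rank:
  assumes "P' \<subseteq> Us K" "p \<in> Us K"
  shows "upos K pr P' p = key_rank (user_key pr) P' p"
  unfolding upos_def key_rank_def using user_less_iff assms
  by (intro arg_cong[where f=card]) blast

lemma spos_eq_key_rank: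
  assumes "B' \<subseteq> all_slots" "b \<in> all_slots"
  shows "spos K pr B' b = key_rank (slot_key pr) B' b"
  unfolding spos_def key_rank_def using slot_gt_iff assms
  by (intro arg_cong[where f=card]) blast

lemma vpos_eq_key_rank:
  assumes "x \<in> xall K pr"
  shows "vpos K pr x = key_rank (unit_key pr) (xall K pr) x"
  unfolding vpos_def key_rank_def using vgt_iff assms
  by (intro arg_cong[where f=card]) blast

section \<open>The canonical assignment\<close>

definition nbeating :: "('u,'a) prof \<Rightarrow> 'u \<Rightarrow> nat" where
  "nbeating pr p = card {b\<in>all_slots. slot_beats_user K pr b p}"

abbreviation "csize pr P' \<equiv> card (canon K pr P' all_slots)"
abbreviation "urank pr P' p \<equiv> key_rank (user_key pr) P' p"
abbreviation "srank pr b \<equiv> key_rank (slot_key pr) all_slots b"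

text \<open>The user at position i is matched to the slot at position i, which beats it iff more than i
  slots beat it.\<close>

definition canon_users :: "('u,'a) prof \<Rightarrow> 'u set \<Rightarrow> 'u set" where
  "canon_users pr P' = {p\<in>P'. urank pr P' p < nbeating pr p}"

lemma slot_beats_user_iff: "slot_beats_user K pr b p \<longleftrightarrow> rv pr (fst b) > rc pr p \<or>
   (rv pr (fst b) = rc pr p \<and> rnk K (Inr (fst b)) < rnk K (Inl (med K p)))"
  by (cases b) auto

lemma slot_beats_user_higher:
  assumes "slot_key pr b' < slot_key pr b" "slot_beats_user K pr b p"
  shows "slot_beats_user K pr b' p"
  using assms unfolding slot_beats_user_iff slot_key_def by auto

lemma slot_beats_user_cheaper:
  assumes "user_key pr q \<le> user_key pr p" "slot_beats_user K pr b p"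
  shows "slot_beats_user K pr b q"
  using assms unfolding slot_beats_user_iff user_key_def by auto

lemma nbeating_antimono: "user_key pr q \<le> user_key pr p \<Longrightarrow> nbeating pr p \<le> nbeating pr q"
  unfolding nbeating_def using finite_all_slots slot_beats_user_cheaper by (intro card_mono) auto

lemma nbeating_le: "nbeating pr p \<le> card all_slots"
  unfolding nbeating_def using finite_all_slots by (intro card_mono) auto

lemma slot_beats_user_iff_rank:
  assumes "b \<in> all_slots"
  shows "slot_beats_user K pr b p \<longleftrightarrow> srank pr b < nbeating pr p"
proof
  assume h: "slot_beats_user K pr b p"
  have "insert b {b'\<in>all_slots. slot_key pr b' < slot_key pr b}
      \<subseteq> {b\<in>all_slots. slot_beats_user K pr b p}"
    using h assms slot_beats_user_higher[of pr _ b p] by blast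
  then have "card (insert b {b'\<in>all_slots. slot_key pr b' < slot_key pr b}) \<le> nbeating pr p"
    unfolding nbeating_def using finite_all_slots by (intro card_mono) auto
  moreover have "card (insert b {b'\<in>all_slots. slot_key pr b' < slot_key pr b}) = srank pr b + 1"
    unfolding key_rank_def using finite_all_slots by (subst card_insert_disjoint) auto
  ultimately show "srank pr b < nbeating pr p" by simp
next
  assume h: "srank pr b < nbeating pr p"
  show "slot_beats_user K pr b p"
  proof (rule ccontr)
    assume nb: "\<not> slot_beats_user K pr b p"
    have "{b\<in>all_slots. slot_beats_user K pr b p} \<subseteq> {b'\<in>all_slots. slot_key pr b' < slot_key pr b}"
    proof
      fix b' assume b': "b' \<in> {b\<in>all_slots. slot_beats_user K pr b p}"
      then have "b' \<noteq> b" using nb by auto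
      then have "slot_key pr b' \<noteq> slot_key pr b" using inj_on_slot_key b' assms inj_onD
        by fastforce
      moreover have "\<not> slot_key pr b < slot_key pr b'" using slot_beats_user_higher b' nb
        by blast
      ultimately show "b' \<in> {b'\<in>all_slots. slot_key pr b' < slot_key pr b}" using b' by auto
    qed
    then have "nbeating pr p \<le> srank pr b"
      unfolding nbeating_def key_rank_def using finite_all_slots by (intro card_mono) auto
    with h show False by simp
  qed
qed

lemma canon_eq_key_rank:
  assumes "valid_prof K pr" "P' \<subseteq> rP pr"
  shows "canon K pr P' all_slots = {(p,b). p\<in>P' \<and> b\<in>all_slots \<and> urank pr P' p = srank pr b
      \<and> urank pr P' p < nbeating pr p}"
proof -
  have PU: "P' \<subseteq> Us K" using assms reported_subset_users by blast
  show ?thesis unfolding canon_def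
    using upos_eq_key_rank[OF PU] spos_eq_key_rank[of all_slots] slot_beats_user_iff_rank PU by auto
qed

lemma finite_reported_subset: "valid_prof K pr \<Longrightarrow> P' \<subseteq> rP pr \<Longrightarrow> finite P'"
  using finite_reported finite_subset by blast

lemma csize_eq_card_canon_users:
  assumes v: "valid_prof K pr" and P: "P' \<subseteq> rP pr"
  shows "csize pr P' = card (canon_users pr P')"
proof -
  let ?C = "canon K pr P' all_slots"
  have inj: "inj_on fst ?C"
  proof (rule inj_onI)
    fix x y assume x: "x \<in> ?C" and y: "y \<in> ?C" and e: "fst x = fst y"
    obtain p b p' b' where xy: "x = (p,b)" "y = (p',b')" by (cases x, cases y)
    have "b \<in> all_slots" "b' \<in> all_slots" "srank pr b = srank pr b'"
      using x y e xy canon_eq_key_rank[OF v P] by auto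
    then have "b = b'" using key_rank_eq_iff[OF finite_all_slots inj_on_slot_key] by blast
    then show "x = y" using xy e by simp
  qed
  have img: "fst ` ?C = canon_users pr P'"
  proof
    show "fst ` ?C \<subseteq> canon_users pr P'" using canon_eq_key_rank[OF v P]
      unfolding canon_users_def by auto
    show "canon_users pr P' \<subseteq> fst ` ?C"
    proof
      fix p assume p: "p \<in> canon_users pr P'"
      then have "urank pr P' p < card all_slots" using nbeating_le[of pr p]
        unfolding canon_users_def by auto
      then obtain b where b: "b \<in> all_slots" "srank pr b = urank pr P' p"
        using key_rank_surj[OF finite_all_slots inj_on_slot_key] by blast
      then have "(p,b) \<in> ?C" using p canon_eq_key_rank[OF v P] unfolding canon_users_def by auto
      then show "p \<in> fst ` ?C" by force
    qed
  qed
  show ?thesis using card_image[OF inj] img by simp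
qed

lemma canon_users_downward_closed:
  assumes v: "valid_prof K pr" and P: "P' \<subseteq> rP pr"
    and p: "p \<in> canon_users pr P'" and q: "q \<in> P'" and lt: "user_key pr q < user_key pr p"
  shows "q \<in> canon_users pr P'"
proof -
  have fin: "finite P'" using finite_reported_subset v P by blast
  have "p \<in> P'" using p canon_users_def by auto
  have "urank pr P' q < urank pr P' p" using key_rank_less[OF fin q \<open>p\<in>P'\<close> lt] .
  also have "\<dots> < nbeating pr p" using p canon_users_def by auto
  also have "\<dots> \<le> nbeating pr q" using nbeating_antimono lt by auto
  finally show ?thesis using q canon_users_def by auto
qed

lemma urank_less_csize_iff:
  assumes v: "valid_prof K pr" and P: "P' \<subseteq> rP pr" and p: "p \<in> P'"
  shows "urank pr P' p < csize pr P' \<longleftrightarrow> urank pr P' p < nbeating pr p"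
proof -
  have fin: "finite P'" using finite_reported_subset v P by blast
  have inj: "inj_on (user_key pr) P'" using inj_on_user_key_subset v P by blast
  have finG: "finite (canon_users pr P')" using fin canon_users_def by auto
  have GP: "canon_users pr P' \<subseteq> P'" using canon_users_def by auto
  show ?thesis unfolding csize_eq_card_canon_users[OF v P]
  proof
    assume h: "urank pr P' p < nbeating pr p"
    then have pG: "p \<in> canon_users pr P'" using p canon_users_def by auto
    have "key_rank (user_key pr) (canon_users pr P') p = urank pr P' p"
      using canon_users_downward_closed[OF v P pG] by (intro key_rank_cong_downset[OF GP]) auto
    moreover have "key_rank (user_key pr) (canon_users pr P') p < card (canon_users pr P')"
      using key_rank_less_card[OF finG pG] .
    ultimately show "urank pr P' p < card (canon_users pr P')" by simp
  next
    assume h: "urank pr P' p < card (canon_users pr P')"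
    show "urank pr P' p < nbeating pr p"
    proof (rule ccontr)
      assume n: "\<not> urank pr P' p < nbeating pr p"
      then have pG: "p \<notin> canon_users pr P'" using canon_users_def by auto
      have "canon_users pr P' \<subseteq> {q\<in>P'. user_key pr q < user_key pr p}"
      proof
        fix q assume q: "q \<in> canon_users pr P'"
        then have "q \<noteq> p" using pG by auto
        then have "user_key pr q \<noteq> user_key pr p" using inj q GP p inj_onD by fastforce
        moreover have "\<not> user_key pr p < user_key pr q"
          using canon_users_downward_closed[OF v P q p] pG by blast
        ultimately show "q \<in> {q\<in>P'. user_key pr q < user_key pr p}" using q GP by auto
      qed
      then have "card (canon_users pr P') \<le> urank pr P' p" unfolding key_rank_def using fin
        by (intro card_mono) auto
      with h show False by simp
    qed
  qed
qed

lemma csize_le_card: "valid_prof K pr \<Longrightarrow> P' \<subseteq> rP pr \<Longrightarrow> csize pr P' \<le> card P'"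
  using csize_eq_card_canon_users[of pr P'] finite_reported_subset[of pr P']
    unfolding canon_users_def by (auto intro: card_mono)

lemma obtain_user_of_rank:
  assumes v: "valid_prof K pr" and P: "P' \<subseteq> rP pr" and k: "k < card P'"
  obtains p where "p \<in> P'" "urank pr P' p = k" "k < csize pr P' \<longleftrightarrow> k < nbeating pr p"
proof -
  have fin: "finite P'" using finite_reported_subset v P by blast
  have inj: "inj_on (user_key pr) P'" using inj_on_user_key_subset v P by blast
  obtain p where p: "p \<in> P'" "urank pr P' p = k" using key_rank_surj[OF fin inj k] by blast
  then show ?thesis using that urank_less_csize_iff[OF v P p(1)] by auto
qed

lemma csize_mono:
  assumes v: "valid_prof K pr" and P: "P'' \<subseteq> P'" "P' \<subseteq> rP pr"
  shows "csize pr P'' \<le> csize pr P'"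
proof (rule ccontr)
  assume "\<not> ?thesis"
  then have lt: "csize pr P' < csize pr P''" by simp
  define k where "k = csize pr P'"
  have P2: "P'' \<subseteq> rP pr" using P by blast
  have fin: "finite P'" "finite P''" using finite_reported_subset v P P2 by auto
  have k1: "k < card P''" using lt csize_le_card[OF v P2] k_def by simp
  have k2: "k < card P'" using k1 card_mono[OF fin(1) P(1)] by simp
  obtain p'' where p'': "p'' \<in> P''" "urank pr P'' p'' = k" "k < csize pr P'' \<longleftrightarrow> k < nbeating pr p''"
    using obtain_user_of_rank[OF v P2 k1] by blast
  obtain p where p: "p \<in> P'" "urank pr P' p = k" "k < csize pr P' \<longleftrightarrow> k < nbeating pr p"
    using obtain_user_of_rank[OF v P(2) k2] by blast
  have b1: "k < nbeating pr p''" using p''(3) lt k_def by simp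
  have "urank pr P'' p'' \<le> urank pr P' p''" using key_rank_subset_le[OF fin(1) P(1)] .
  then have "\<not> user_key pr p'' < user_key pr p"
    using key_rank_less[OF fin(1) _ p(1), of p'' "user_key pr"] p''(1,2) p(2) P(1) by auto
  then have "user_key pr p \<le> user_key pr p''" by simp
  then have "nbeating pr p'' \<le> nbeating pr p" using nbeating_antimono by blast
  then have "k < csize pr P'" using p(3) b1 by simp
  then show False using k_def by simp
qed

lemma csize_le_remove:
  assumes v: "valid_prof K pr" and P: "P'' \<subseteq> P'" "P' \<subseteq> rP pr" and c: "card (P' - P'') \<le> d"
  shows "csize pr P' \<le> csize pr P'' + d"
proof (rule ccontr)
  assume "\<not> ?thesis"
  then have lt: "csize pr P'' + d < csize pr P'" by simp
  define L where "L = csize pr P'"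
  define k where "k = L - d - 1"
  have P2: "P'' \<subseteq> rP pr" using P by blast
  have fin: "finite P'" "finite P''" using finite_reported_subset v P P2 by auto
  have L1: "L - 1 < card P'" using csize_le_card[OF v P(2)] lt L_def by simp
  obtain p where p: "p \<in> P'" "urank pr P' p = L - 1" "L - 1 < csize pr P' \<longleftrightarrow> L - 1 < nbeating pr p"
    using obtain_user_of_rank[OF v P(2) L1] by blast
  have bp: "L - 1 < nbeating pr p" using p(3) L_def lt by simp
  have cP: "card P' = card P'' + card (P' - P'')"
    using fin P(1)
    by (metis card_Diff_subset card_mono diff_add_inverse le_add_diff_inverse finite_subset)
  have k1: "k < card P''" using L1 c cP k_def lt L_def by linarith
  obtain q where q: "q \<in> P''" "urank pr P'' q = k" "k < csize pr P'' \<longleftrightarrow> k < nbeating pr q"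
    using obtain_user_of_rank[OF v P2 k1] by blast
  have "urank pr P' q \<le> urank pr P'' q + card (P' - P'')"
    using key_rank_le_subset_plus[OF fin(1) P(1)] .
  then have "urank pr P' q \<le> L - 1" using q(2) c k_def lt L_def by linarith
  then have "\<not> user_key pr p < user_key pr q"
    using key_rank_less[OF fin(1) p(1), of q "user_key pr"] q(1) P(1) p(2) by auto
  then have "user_key pr q \<le> user_key pr p" by simp
  then have "nbeating pr p \<le> nbeating pr q" using nbeating_antimono by blast
  then have "k < csize pr P''" using q(3) bp k_def by simp
  then show False using lt k_def L_def by linarith
qed

section \<open>Thresholds and items\<close>

abbreviation "Pminus pr m \<equiv> rP pr - usersof K m"

lemma Pminus_subset: "Pminus pr m \<subseteq> rP pr" by blast

lemma card_reported_Diff_Pminus: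
  assumes "m \<in> Ms K"
  shows "card (rP pr - Pminus pr m) \<le> \<gamma>"
proof -
  have "card (rP pr - Pminus pr m) \<le> card (usersof K m)"
    by (rule card_mono[OF finite_usersof]) blast
  then show ?thesis using card_usersof_le_gamma assms by auto
qed

lemma pm_char:
  assumes v: "valid_prof K pr"
  shows "pm K pr m = (if 4 * \<gamma> < csize pr (Pminus pr m)
     then Some (THE p. p \<in> Pminus pr m \<and> urank pr (Pminus pr m) p
       = csize pr (Pminus pr m) - 4 * \<gamma> - 1) else None)"
proof -
  have PU: "Pminus pr m \<subseteq> Us K" using reported_subset_users v by blast
  have "\<And>p. p \<in> Pminus pr m \<Longrightarrow> upos K pr (Pminus pr m) p = urank pr (Pminus pr m) p"
    using upos_eq_key_rank[OF PU] PU by blast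
  then have e: "(\<lambda>p. p \<in> Pminus pr m \<and> upos K pr (Pminus pr m) p = csize pr (Pminus pr m) - 4 * \<gamma> - 1)
      = (\<lambda>p. p \<in> Pminus pr m \<and> urank pr (Pminus pr m) p = csize pr (Pminus pr m) - 4 * \<gamma> - 1)"
    by auto
  show ?thesis unfolding pm_def Let_def e by simp
qed

lemma pm_Some:
  assumes v: "valid_prof K pr" and s: "pm K pr m = Some q"
  shows "4 * \<gamma> < csize pr (Pminus pr m)" "q \<in> Pminus pr m" "urank pr (Pminus pr m) q
      = csize pr (Pminus pr m) - 4 * \<gamma> - 1"
proof -
  have L: "4 * \<gamma> < csize pr (Pminus pr m)" using s pm_char[OF v, of m]
    by (auto split: if_splits)
  have fin: "finite (Pminus pr m)" using finite_reported_subset[OF v Pminus_subset] .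
  have inj: "inj_on (user_key pr) (Pminus pr m)" using inj_on_user_key_subset[OF v Pminus_subset] .
  have "csize pr (Pminus pr m) - 4 * \<gamma> - 1 < card (Pminus pr m)"
    using csize_le_card[OF v Pminus_subset, of m] L by linarith
  then have ex: "\<exists>!p. p \<in> Pminus pr m \<and> urank pr (Pminus pr m) p
      = csize pr (Pminus pr m) - 4 * \<gamma> - 1"
    using key_rank_ex1[OF fin inj] by blast
  have "q = (THE p. p \<in> Pminus pr m \<and> urank pr (Pminus pr m) p
      = csize pr (Pminus pr m) - 4 * \<gamma> - 1)"
    using s L pm_char[OF v, of m] by simp
  then have "q \<in> Pminus pr m \<and> urank pr (Pminus pr m) q = csize pr (Pminus pr m) - 4 * \<gamma> - 1"
    using theI'[OF ex] by simp
  then show "4 * \<gamma> < csize pr (Pminus pr m)" "q \<in> Pminus pr m" "urank pr (Pminus pr m) q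
      = csize pr (Pminus pr m) - 4 * \<gamma> - 1"
    using L by auto
qed

lemma pm_None: "valid_prof K pr \<Longrightarrow> pm K pr m = None \<longleftrightarrow> \<not> 4 * \<gamma> < csize pr (Pminus pr m)"
  using pm_char by auto

lemma hatP_subset: "hatP K pr m \<subseteq> rP pr \<inter> usersof K m"
  unfolding hatP_def by (auto split: option.splits)

lemma hatP_None: "pm K pr m = None \<Longrightarrow> hatP K pr m = {}"
  unfolding hatP_def by auto

lemma hatP_Some: "pm K pr m = Some q \<Longrightarrow> hatP K pr m = {p \<in> rP pr \<inter> usersof K m. user_less K pr p q}"
  unfolding hatP_def by auto

lemma hatP_below_threshold:
  assumes v: "valid_prof K pr" and s: "pm K pr m = Some q" and p: "p \<in> hatP K pr m"
  shows "user_key pr p < user_key pr q"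
proof -
  have "q \<in> Us K" using pm_Some(2)[OF v s] reported_subset_users[OF v] by blast
  moreover have "p \<in> Us K" "user_less K pr p q"
    using p hatP_Some[OF s] reported_subset_users[OF v] by auto
  ultimately show ?thesis using user_less_iff by blast
qed

lemma items_subset: "items K pr \<subseteq> rP pr" unfolding items_def using hatP_subset by blast

lemma finite_items: "valid_prof K pr \<Longrightarrow> finite (items K pr)"
  using items_subset finite_reported finite_subset by blast

lemma hatP_disjoint: "m \<noteq> m' \<Longrightarrow> hatP K pr m \<inter> hatP K pr m' = {}"
  using hatP_subset[of pr m] hatP_subset[of pr m'] unfolding usersof_def by auto

lemma finite_hatP: "valid_prof K pr \<Longrightarrow> finite (hatP K pr m)"
proof -
  assume v: "valid_prof K pr"
  have "finite (rP pr \<inter> usersof K m)" using finite_reported[OF v] by blast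
  then show ?thesis using finite_subset[OF hatP_subset] by blast
qed

lemma nitems_sum:
  assumes v: "valid_prof K pr"
  shows "nitems K pr = (\<Sum>m\<in>Ms K. card (hatP K pr m))"
  unfolding nitems_def items_def
  by (rule card_UN_disjoint[OF finite_mediators]) (use finite_hatP[OF v] hatP_disjoint in auto)

lemma mem_items_iff_hatP: "p \<in> usersof K m \<Longrightarrow> m \<in> Ms K \<Longrightarrow> p \<in> items K pr \<longleftrightarrow> p \<in> hatP K pr m"
  unfolding items_def using hatP_subset unfolding usersof_def by blast

text \<open>q is the threshold user p_m of largest key, so rc q = max c_m is the value of the dummy
  advertiser.\<close>

definition max_threshold :: "('u,'a) prof \<Rightarrow> 'm \<Rightarrow> 'u \<Rightarrow> bool" where
  "max_threshold pr m q \<longleftrightarrow> m \<in> Ms K \<and> pm K pr m = Some q \<and>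
     (\<forall>m'\<in>Ms K. \<forall>q'. pm K pr m' = Some q' \<longrightarrow> user_key pr q' \<le> user_key pr q)"

lemma obtain_max_threshold:
  assumes v: "valid_prof K pr" and n: "0 < nitems K pr"
  obtains m q where "max_threshold pr m q"
proof -
  define Q where "Q = {q. \<exists>m\<in>Ms K. pm K pr m = Some q}"
  have finQ: "finite Q" unfolding Q_def
    using pm_Some(2)[OF v] finite_reported[OF v] by (blast intro: finite_subset)
  obtain m p where "m \<in> Ms K" "p \<in> hatP K pr m"
    using n unfolding nitems_def items_def by (auto simp: card_gt_0_iff)
  then have "Q \<noteq> {}" unfolding Q_def using hatP_None by (cases "pm K pr m") auto
  then obtain q where q: "q \<in> Q" "user_key pr q = Max (user_key pr ` Q)"
    using Max_in[of "user_key pr ` Q"] finQ by (metis empty_is_image finite_imageI imageE)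
  then have "\<And>q'. q' \<in> Q \<Longrightarrow> user_key pr q' \<le> user_key pr q" using finQ
    by auto
  then show ?thesis using that q(1) unfolding Q_def max_threshold_def by blast
qed

lemma items_below_max_threshold:
  assumes v: "valid_prof K pr" and mq: "max_threshold pr m q"
  shows "items K pr \<subseteq> {p\<in>rP pr. user_key pr p < user_key pr q}"
proof
  fix p assume "p \<in> items K pr"
  then obtain m' where m': "m' \<in> Ms K" "p \<in> hatP K pr m'" unfolding items_def by blast
  then obtain q' where q': "pm K pr m' = Some q'" using hatP_None by (cases "pm K pr m'") auto
  have "user_key pr p < user_key pr q'" using hatP_below_threshold[OF v q' m'(2)] .
  also have "\<dots> \<le> user_key pr q" using mq m'(1) q' unfolding max_threshold_def by blast
  finally show "p \<in> {p\<in>rP pr. user_key pr p < user_key pr q}" using m'(2) hatP_subset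
    by blast
qed

lemma nitems_bound_at_max_threshold:
  assumes v: "valid_prof K pr" and mq: "max_threshold pr m q"
  shows "nitems K pr + 3 * \<gamma> + 1 \<le> csize pr (Pminus pr m)"
proof -
  have m: "m \<in> Ms K" and q: "pm K pr m = Some q" using mq unfolding max_threshold_def by auto
  have fin: "finite (rP pr)" using finite_reported[OF v] .
  have "nitems K pr \<le> urank pr (rP pr) q"
    unfolding nitems_def key_rank_def using items_below_max_threshold[OF v mq] fin
    by (intro card_mono) auto
  also have "\<dots> \<le> urank pr (Pminus pr m) q + card (rP pr - Pminus pr m)"
    using key_rank_le_subset_plus[OF fin Pminus_subset] .
  also have "card (rP pr - Pminus pr m) \<le> \<gamma>" using card_reported_Diff_Pminus[OF m] .
  finally show ?thesis using pm_Some[OF v q] by linarith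
qed

lemma nitems_bound:
  assumes v: "valid_prof K pr"
  shows "nitems K pr = 0 \<or> nitems K pr + 3 * \<gamma> + 1 \<le> csize pr (rP pr)"
proof (cases "nitems K pr = 0")
  case False
  then obtain m q where mq: "max_threshold pr m q" using obtain_max_threshold[OF v] by blast
  then show ?thesis
    using nitems_bound_at_max_threshold[OF v mq] csize_mono[OF v Pminus_subset[of pr m] subset_refl]
    by auto
qed simp

lemma dval_eq_max_threshold:
  assumes v: "valid_prof K pr" and mq: "max_threshold pr m q"
  shows "dval K pr = rc pr q"
proof -
  have eqs: "{x. \<exists>m\<in>Ms K. cm K pr m = Some x} = rc pr ` {q. \<exists>m\<in>Ms K. pm K pr m = Some q}"
    unfolding cm_def by auto
  have fin: "finite {q. \<exists>m\<in>Ms K. pm K pr m = Some q}"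
    using finite_mediators
    by (rule finite_subset[rotated, OF finite_imageI[of "Ms K" "\<lambda>m. the (pm K pr m)"]]) force
  show ?thesis unfolding dval_def eqs
  proof (rule Max_eqI)
    show "finite (rc pr ` {q. \<exists>m\<in>Ms K. pm K pr m = Some q})" using fin by blast
    show "rc pr q \<in> rc pr ` {q. \<exists>m\<in>Ms K. pm K pr m = Some q}" using mq
      unfolding max_threshold_def by blast
    fix y assume "y \<in> rc pr ` {q. \<exists>m\<in>Ms K. pm K pr m = Some q}"
    then obtain q' m' where "m' \<in> Ms K" "pm K pr m' = Some q'" "y = rc pr q'" by blast
    then show "y \<le> rc pr q" using mq rc_le_of_user_key_le unfolding max_threshold_def by blast
  qed
qed

lemma cm_le_dval:
  assumes v: "valid_prof K pr" and m: "m \<in> Ms K" and c: "cm K pr m = Some x"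
  shows "x \<le> dval K pr"
proof -
  have fin: "finite {x. \<exists>m\<in>Ms K. cm K pr m = Some x}"
    using finite_mediators
    by (rule finite_subset[rotated, OF finite_imageI[of "Ms K" "\<lambda>m. the (cm K pr m)"]]) force
  show ?thesis unfolding dval_def using m c fin by (intro Max_ge) auto
qed

lemma dval_nonneg:
  assumes v: "valid_prof K pr" and n: "0 < nitems K pr"
  shows "0 \<le> dval K pr"
proof -
  obtain m q where mq: "max_threshold pr m q" using obtain_max_threshold[OF v n] .
  then have "q \<in> rP pr" using pm_Some(2)[OF v] unfolding max_threshold_def by blast
  then show ?thesis using dval_eq_max_threshold[OF v mq] v unfolding valid_prof_def by auto
qed

text \<open>The last user p of the canonical assignment without m lies above the threshold user, so every
  slot beating p is worth at least the value of the dummy.\<close>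

lemma nitems_add_le_card_high_slots:
  assumes v: "valid_prof K pr" and n: "0 < nitems K pr"
  shows "nitems K pr + 3 * \<gamma> + 1 \<le> card {b\<in>all_slots. dval K pr \<le> rv pr (fst b)}"
proof -
  obtain m q where mq: "max_threshold pr m q" using obtain_max_threshold[OF v n] .
  then have q: "pm K pr m = Some q" unfolding max_threshold_def by blast
  define L where "L = csize pr (Pminus pr m)"
  have nb: "nitems K pr + 3 * \<gamma> + 1 \<le> L" unfolding L_def
    using nitems_bound_at_max_threshold[OF v mq] .
  have fin: "finite (Pminus pr m)" using finite_reported_subset[OF v Pminus_subset] .
  have L1: "L - 1 < card (Pminus pr m)" using csize_le_card[OF v Pminus_subset, of m] nb L_def
    by linarith
  obtain p where p: "p \<in> Pminus pr m" "urank pr (Pminus pr m) p = L - 1"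
      "L - 1 < csize pr (Pminus pr m) \<longleftrightarrow> L - 1 < nbeating pr p"
    using obtain_user_of_rank[OF v Pminus_subset L1] by blast
  have bp: "L \<le> nbeating pr p" using p(3) L_def nb by linarith
  have qs: "q \<in> Pminus pr m" "urank pr (Pminus pr m) q = L - 4 * \<gamma> - 1"
    using pm_Some[OF v q] L_def by auto
  have "\<not> user_key pr p < user_key pr q"
    using key_rank_less[OF fin p(1) qs(1), of "user_key pr"] p(2) qs(2) by linarith
  then have "dval K pr \<le> rc pr p"
    using rc_le_of_user_key_le dval_eq_max_threshold[OF v mq] by (simp add: not_less)
  then have "{b\<in>all_slots. slot_beats_user K pr b p} \<subseteq> {b\<in>all_slots. dval K pr \<le> rv pr (fst b)}"
    unfolding slot_beats_user_iff by auto
  then have "nbeating pr p \<le> card {b\<in>all_slots. dval K pr \<le> rv pr (fst b)}"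
    unfolding nbeating_def using finite_all_slots by (intro card_mono) auto
  then show ?thesis using bp nb by linarith
qed

lemma nitems_bound_card_slots: "valid_prof K pr \<Longrightarrow> nitems K pr + 3 * \<gamma> + 1 \<le> card all_slots
    \<or> nitems K pr = 0"
  using nitems_add_le_card_high_slots[of pr] card_mono[OF finite_all_slots, of "{b\<in>all_slots. dval K pr \<le> rv pr (fst b)}"]
  by (cases "nitems K pr = 0") auto

section \<open>The VCG auction\<close>

definition win_slots :: "('u,'a) prof \<Rightarrow> ('a \<times> nat) set" where
  "win_slots pr = {b\<in>all_slots. srank pr b < nitems K pr}"

abbreviation "units_of a \<equiv> RS ` slots K {a}"

lemma unit_key_RS_less_iff:
  "unit_key pr (RS b') < unit_key pr (RS b) \<longleftrightarrow> slot_key pr b' < slot_key pr b"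
  unfolding unit_key_def slot_key_def by auto

lemma fst_unit_key: "fst (unit_key pr x) = - vval K pr x"
  unfolding unit_key_def by (cases x) (auto split: prod.splits)

lemma card_xall: "card (xall K pr) = card all_slots + nitems K pr"
proof -
  have "card (xall K pr) = card (RS ` all_slots) + card (DS ` {..<nitems K pr} :: 'a vslot set)"
    unfolding xall_def using finite_all_slots by (subst card_Un_disjoint) auto
  moreover have "card (RS ` all_slots) = card all_slots" by (rule card_image) (simp add: inj_on_def)
  moreover have "card (DS ` {..<nitems K pr} :: 'a vslot set) = nitems K pr"
    by (subst card_image) (auto simp: inj_on_def)
  ultimately show ?thesis by simp
qed

lemma winners_eq_key_rank: "winners K pr = {x\<in>xall K pr. key_rank (unit_key pr) (xall K pr) x
    < nitems K pr}"
  unfolding winners_def using vpos_eq_key_rank by auto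

lemma card_winners: "card (winners K pr) = nitems K pr"
  unfolding winners_eq_key_rank using card_key_rank_less[OF finite_xall inj_on_unit_key] card_xall
    by simp

lemma winners_subset_xall: "winners K pr \<subseteq> xall K pr" unfolding winners_def by auto

lemma finite_winners: "finite (winners K pr)" unfolding winners_def using finite_xall[of pr] by simp

lemma DS_notin_winners:
  assumes v: "valid_prof K pr" and j: "j < nitems K pr"
  shows "DS j \<notin> winners K pr"
proof -
  have n: "0 < nitems K pr" using j by simp
  have DSx: "DS j \<in> xall K pr" using j mem_xall_iff by auto
  have "RS ` {b\<in>all_slots. dval K pr \<le> rv pr (fst b)} \<subseteq> {y\<in>xall K pr. unit_key pr y
      < unit_key pr (DS j)}"
    unfolding xall_def unit_key_def by auto
  then have "card (RS ` {b\<in>all_slots. dval K pr \<le> rv pr (fst b)})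
      \<le> key_rank (unit_key pr) (xall K pr) (DS j)"
    unfolding key_rank_def using finite_xall by (intro card_mono) auto
  moreover have "card (RS ` {b\<in>all_slots. dval K pr \<le> rv pr (fst b)})
      = card {b\<in>all_slots. dval K pr \<le> rv pr (fst b)}"
    by (rule card_image) (simp add: inj_on_def)
  ultimately have "nitems K pr < key_rank (unit_key pr) (xall K pr) (DS j)"
    using nitems_add_le_card_high_slots[OF v n] by linarith
  then show ?thesis unfolding winners_eq_key_rank by auto
qed

lemma winners_real:
  assumes v: "valid_prof K pr" and x: "x \<in> winners K pr"
  shows "\<exists>b\<in>all_slots. x = RS b"
proof -
  have "x \<in> xall K pr" using x winners_def by auto
  then show ?thesis using DS_notin_winners[OF v] x mem_xall_iff by blast
qed

lemma key_rank_winner: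
  assumes v: "valid_prof K pr" and w: "RS b \<in> winners K pr"
  shows "key_rank (unit_key pr) (xall K pr) (RS b) = srank pr b"
proof -
  have "{y\<in>xall K pr. unit_key pr y < unit_key pr (RS b)}
      = RS ` {b'\<in>all_slots. slot_key pr b' < slot_key pr b}"
  proof
    show "RS ` {b'\<in>all_slots. slot_key pr b' < slot_key pr b}
        \<subseteq> {y\<in>xall K pr. unit_key pr y < unit_key pr (RS b)}"
      by (auto simp: unit_key_RS_less_iff mem_xall_iff)
    show "{y\<in>xall K pr. unit_key pr y < unit_key pr (RS b)}
        \<subseteq> RS ` {b'\<in>all_slots. slot_key pr b' < slot_key pr b}"
    proof
      fix y assume y: "y \<in> {y\<in>xall K pr. unit_key pr y < unit_key pr (RS b)}"
      have bx: "RS b \<in> xall K pr" using w winners_def by auto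
      show "y \<in> RS ` {b'\<in>all_slots. slot_key pr b' < slot_key pr b}"
      proof (cases y)
        case (RS b')
        then show ?thesis using y by (auto simp: unit_key_RS_less_iff mem_xall_iff)
      next
        case (DS j)
        have yx: "y \<in> xall K pr" using y by auto
        have "key_rank (unit_key pr) (xall K pr) y < key_rank (unit_key pr) (xall K pr) (RS b)"
          using key_rank_less[OF finite_xall yx bx] y by auto
        then have "y \<in> winners K pr" using w yx unfolding winners_eq_key_rank by auto
        moreover have "j < nitems K pr" using yx DS mem_xall_iff by auto
        ultimately show ?thesis using DS_notin_winners[OF v] DS by auto
      qed
    qed
  qed
  then show ?thesis unfolding key_rank_def by (simp add: card_image inj_on_def)
qed

lemma card_win_slots: "valid_prof K pr \<Longrightarrow> card (win_slots pr) = nitems K pr"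
  unfolding win_slots_def
    using nitems_bound_card_slots card_key_rank_less[OF finite_all_slots inj_on_slot_key] by force

lemma winners_eq_win_slots:
  assumes v: "valid_prof K pr"
  shows "winners K pr = RS ` win_slots pr"
proof -
  have sub: "winners K pr \<subseteq> RS ` win_slots pr"
  proof
    fix x assume x: "x \<in> winners K pr"
    then obtain b where b: "b \<in> all_slots" "x = RS b" using winners_real[OF v] by blast
    have "key_rank (unit_key pr) (xall K pr) x < nitems K pr" using x winners_eq_key_rank by auto
    then have "b \<in> win_slots pr" using key_rank_winner[OF v] x b unfolding win_slots_def by auto
    then show "x \<in> RS ` win_slots pr" using b by auto
  qed
  have "card (RS ` win_slots pr) = card (winners K pr)"
    using card_win_slots[OF v] card_winners by (simp add: card_image inj_on_def)
  moreover have "finite (RS ` win_slots pr)" unfolding win_slots_def using finite_all_slots by auto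
  ultimately show ?thesis using sub card_subset_eq by metis
qed

lemma win_slots_subset: "win_slots pr \<subseteq> all_slots" unfolding win_slots_def by auto

lemma urank_items_image:
  assumes v: "valid_prof K pr"
  shows "urank pr (items K pr) ` items K pr = {..<nitems K pr}"
  unfolding nitems_def
    using key_rank_image[OF finite_items[OF v] inj_on_user_key_subset[OF v items_subset]] .

lemma assign_eq_key_rank:
  assumes v: "valid_prof K pr"
  shows "assign K pr = {(p,b). p \<in> items K pr \<and> b \<in> win_slots pr \<and> urank pr (items K pr) p
      = srank pr b}"
proof -
  have IU: "items K pr \<subseteq> Us K" using items_subset reported_subset_users[OF v] by blast
  have "\<And>p b. p \<in> items K pr \<Longrightarrow> b \<in> win_slots pr \<Longrightarrow>
     upos K pr (items K pr) p = vpos K pr (RS b) \<longleftrightarrow> urank pr (items K pr) p = srank pr b"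
  proof -
    fix p b assume p: "p \<in> items K pr" and b: "b \<in> win_slots pr"
    have w: "RS b \<in> winners K pr" using winners_eq_win_slots[OF v] b by auto
    have "RS b \<in> xall K pr" using w unfolding winners_def by blast
    then have "vpos K pr (RS b) = srank pr b"
      using vpos_eq_key_rank key_rank_winner[OF v w] by simp
    moreover have "upos K pr (items K pr) p = urank pr (items K pr) p"
      using upos_eq_key_rank[OF IU] p IU by auto
    ultimately show "upos K pr (items K pr) p = vpos K pr (RS b) \<longleftrightarrow> urank pr (items K pr) p
        = srank pr b"
      by simp
  qed
  then show ?thesis unfolding assign_def winners_eq_win_slots[OF v] by auto
qed

lemma finite_assign:
  assumes v: "valid_prof K pr"
  shows "finite (assign K pr)"
proof (rule finite_subset)
  show "assign K pr \<subseteq> items K pr \<times> all_slots"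
    using assign_eq_key_rank[OF v] win_slots_subset by auto
  show "finite (items K pr \<times> all_slots)" using finite_items[OF v] finite_all_slots by simp
qed

lemma fst_assign_eq_items:
  assumes v: "valid_prof K pr"
  shows "fst ` assign K pr = items K pr"
proof
  show "fst ` assign K pr \<subseteq> items K pr" using assign_eq_key_rank[OF v] by auto
  show "items K pr \<subseteq> fst ` assign K pr"
  proof
    fix p assume p: "p \<in> items K pr"
    then have i: "urank pr (items K pr) p < nitems K pr" using urank_items_image[OF v] by auto
    then have "urank pr (items K pr) p < card all_slots" using nitems_bound_card_slots[OF v] by auto
    then obtain b where b: "b \<in> all_slots" "srank pr b = urank pr (items K pr) p"
      using key_rank_surj[OF finite_all_slots inj_on_slot_key] by blast
    then have "b \<in> win_slots pr" using i win_slots_def by auto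
    then have "(p,b) \<in> assign K pr" using assign_eq_key_rank[OF v] p b by auto
    then show "p \<in> fst ` assign K pr" by force
  qed
qed

lemma snd_assign:
  assumes v: "valid_prof K pr"
  shows "snd ` assign K pr = win_slots pr" "inj_on snd (assign K pr)"
proof -
  have inj: "inj_on (urank pr (items K pr)) (items K pr)"
    using inj_on_key_rank[OF finite_items[OF v] inj_on_user_key_subset[OF v items_subset]] .
  show "inj_on snd (assign K pr)"
  proof (rule inj_onI)
    fix x y assume x: "x \<in> assign K pr" and y: "y \<in> assign K pr" and e: "snd x = snd y"
    obtain p b p' b' where xy: "x = (p,b)" "y = (p',b')" by (cases x, cases y)
    have "p \<in> items K pr" "p' \<in> items K pr" "urank pr (items K pr) p = urank pr (items K pr) p'"
      using x y xy e assign_eq_key_rank[OF v] by auto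
    then have "p = p'" using inj inj_onD by metis
    then show "x = y" using xy e by simp
  qed
  show "snd ` assign K pr = win_slots pr"
  proof
    show "snd ` assign K pr \<subseteq> win_slots pr" using assign_eq_key_rank[OF v] by auto
    show "win_slots pr \<subseteq> snd ` assign K pr"
    proof
      fix b assume b: "b \<in> win_slots pr"
      then have "srank pr b \<in> {..<nitems K pr}" unfolding win_slots_def
        by auto
      then obtain p where p: "p \<in> items K pr" "urank pr (items K pr) p = srank pr b"
        using urank_items_image[OF v] by (metis imageE)
      then have "(p,b) \<in> assign K pr" using assign_eq_key_rank[OF v] b by auto
      then show "b \<in> snd ` assign K pr" by force
    qed
  qed
qed

lemma card_assign_to:
  assumes v: "valid_prof K pr"
  shows "card {x\<in>assign K pr. fst (snd x) = a} = card {b\<in>win_slots pr. fst b = a}"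
proof -
  have "snd ` {x\<in>assign K pr. fst (snd x) = a} = {b\<in>win_slots pr. fst b = a}"
  proof
    show "snd ` {x\<in>assign K pr. fst (snd x) = a} \<subseteq> {b\<in>win_slots pr. fst b = a}"
      using snd_assign(1)[OF v] by auto
    show "{b\<in>win_slots pr. fst b = a} \<subseteq> snd ` {x\<in>assign K pr. fst (snd x) = a}"
    proof
      fix b assume b: "b \<in> {b\<in>win_slots pr. fst b = a}"
      then obtain x where "x \<in> assign K pr" "snd x = b" using snd_assign(1)[OF v]
        by (metis (no_types, lifting) imageE mem_Collect_eq)
      then show "b \<in> snd ` {x\<in>assign K pr. fst (snd x) = a}" using b by force
    qed
  qed
  moreover have i: "inj_on snd {x\<in>assign K pr. fst (snd x) = a}"
    by (rule inj_on_subset[OF snd_assign(2)[OF v]]) auto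
  ultimately show ?thesis using card_image[OF i] by simp
qed

lemma nwin_eq:
  assumes v: "valid_prof K pr"
  shows "nwin K pr a = card {b\<in>win_slots pr. fst b = a}"
proof -
  have "{i. RS (a,i) \<in> winners K pr} = {i. (a,i) \<in> win_slots pr}"
    using winners_eq_win_slots[OF v] by auto
  moreover have "(\<lambda>i. (a,i)) ` {i. (a,i) \<in> win_slots pr} = {b\<in>win_slots pr. fst b = a}" by force
  moreover have "inj_on (\<lambda>i. (a,i)) {i. (a,i) \<in> win_slots pr}" by (simp add: inj_on_def)
  ultimately show ?thesis unfolding nwin_def by (simp add: card_image[symmetric])
qed

lemma card_assign_to_eq_nwin:
  assumes v: "valid_prof K pr"
  shows "card {x\<in>assign K pr. fst (snd x) = a} = nwin K pr a"
  using card_assign_to[OF v] nwin_eq[OF v] by simp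

lemma winners_Int_units_of:
  assumes v: "valid_prof K pr"
  shows "winners K pr \<inter> units_of a = RS ` {b\<in>win_slots pr. fst b = a}"
proof -
  have e: "win_slots pr \<inter> slots K {a} = {b\<in>win_slots pr. fst b = a}"
    using win_slots_subset unfolding slots_def by auto
  have "inj RS" by (simp add: inj_def)
  then have "RS ` win_slots pr \<inter> units_of a = RS ` (win_slots pr \<inter> slots K {a})"
    by (rule image_Int[symmetric])
  then show ?thesis using e winners_eq_win_slots[OF v] by simp
qed

lemma sum_winners_Int_units_of:
  assumes v: "valid_prof K pr"
  shows "sum (vval K pr) (winners K pr \<inter> units_of a) = real (nwin K pr a) * rv pr a"
proof -
  have "sum (vval K pr) (RS ` {b\<in>win_slots pr. fst b = a})
      = sum (\<lambda>b. vval K pr (RS b)) {b\<in>win_slots pr. fst b = a}"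
    by (rule sum.reindex_cong[where l=RS]) (auto simp: inj_on_def)
  also have "\<dots> = sum (\<lambda>b. rv pr a) {b\<in>win_slots pr. fst b = a}"
    by (rule sum.cong) (auto simp: split: prod.splits)
  also have "\<dots> = real (card {b\<in>win_slots pr. fst b = a}) * rv pr a" by simp
  finally show ?thesis using winners_Int_units_of[OF v] nwin_eq[OF v] by simp
qed

lemma card_winners_Int_units_of:
  assumes v: "valid_prof K pr"
  shows "card (winners K pr \<inter> units_of a) = nwin K pr a"
  using winners_Int_units_of[OF v] nwin_eq[OF v] by (simp add: card_image inj_on_def)

lemma finite_optw_values:
  assumes "finite Y"
  shows "finite ((\<lambda>Z. \<Sum>z\<in>Z. vval K pr z) ` {Z. Z \<subseteq> Y \<and> card Z \<le> nitems K pr})"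
  using assms by auto

lemma optw_ge:
  assumes "finite Y" "Z \<subseteq> Y" "card Z \<le> nitems K pr"
  shows "sum (vval K pr) Z \<le> optw K pr Y"
  unfolding optw_def using assms finite_optw_values[OF assms(1)] by (intro Max_ge) auto

lemma optw_ex:
  assumes "finite Y"
  obtains Z where "Z \<subseteq> Y" "card Z \<le> nitems K pr" "optw K pr Y = sum (vval K pr) Z"
proof -
  have ne: "(\<lambda>Z. \<Sum>z\<in>Z. vval K pr z) ` {Z. Z \<subseteq> Y \<and> card Z \<le> nitems K pr} \<noteq> {}" by auto
  have "optw K pr Y \<in> (\<lambda>Z. \<Sum>z\<in>Z. vval K pr z) ` {Z. Z \<subseteq> Y \<and> card Z \<le> nitems K pr}"
    unfolding optw_def using Max_in[OF finite_optw_values[OF assms] ne] .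
  then show ?thesis using that by auto
qed

lemma optw_mono:
  assumes "finite Y'" "Y \<subseteq> Y'"
  shows "optw K pr Y \<le> optw K pr Y'"
proof -
  have "finite Y" using assms finite_subset by blast
  then obtain Z where "Z \<subseteq> Y" "card Z \<le> nitems K pr" "optw K pr Y = sum (vval K pr) Z"
    using optw_ex by blast
  then show ?thesis using optw_ge[OF assms(1)] assms(2) by fastforce
qed

lemma vval_nonneg:
  assumes v: "valid_prof K pr" and x: "x \<in> xall K pr"
  shows "0 \<le> vval K pr x"
proof (cases x)
  case (RS b)
  then have "fst b \<in> As K" using x mem_xall_iff mem_all_slots_iff by auto
  then show ?thesis using v RS unfolding valid_prof_def by (cases b) auto
next
  case (DS j)
  then have "0 < nitems K pr" using x mem_xall_iff by auto
  then show ?thesis using dval_nonneg[OF v] DS by simp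
qed

lemma optw_xall_eq_winners:
  assumes v: "valid_prof K pr"
  shows "optw K pr (xall K pr) = sum (vval K pr) (winners K pr)"
proof (rule antisym)
  obtain Z where Z: "Z \<subseteq> xall K pr" "card Z \<le> nitems K pr" "optw K pr (xall K pr)
      = sum (vval K pr) Z"
    using optw_ex[OF finite_xall] by blast
  have "sum (vval K pr) Z \<le> sum (vval K pr) {x\<in>xall K pr. key_rank (unit_key pr) (xall K pr) x
      < nitems K pr}"
  proof (rule sum_le_sum_top_ranked[OF finite_xall inj_on_unit_key _ Z(1,2)])
    show "\<And>x y. x \<in> xall K pr \<Longrightarrow> y \<in> xall K pr \<Longrightarrow> unit_key pr x < unit_key pr y
        \<Longrightarrow> vval K pr y \<le> vval K pr x"
    proof -
      fix x y assume "unit_key pr x < unit_key pr y"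
      then have "fst (unit_key pr x) \<le> fst (unit_key pr y)"
        using fst_le_of_lex_le[of "unit_key pr x" "unit_key pr y"] by simp
      then show "vval K pr y \<le> vval K pr x" using fst_unit_key by simp
    qed
    show "nitems K pr \<le> card (xall K pr)" using card_xall by simp
    show "card Z = nitems K pr \<or> (\<forall>x\<in>xall K pr. 0 \<le> vval K pr x)"
      using vval_nonneg[OF v] by blast
  qed
  then show "optw K pr (xall K pr) \<le> sum (vval K pr) (winners K pr)"
    using Z(3) winners_eq_key_rank by simp
  show "sum (vval K pr) (winners K pr) \<le> optw K pr (xall K pr)"
    by (rule optw_ge[OF finite_xall]) (auto simp: card_winners, auto simp: winners_def)
qed

lemma charge_eq:
  assumes v: "valid_prof K pr"
  shows "charge K pr a
      = optw K pr (xall K pr - units_of a) - sum (vval K pr) (winners K pr - units_of a)"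
proof -
  have "sum (vval K pr) (winners K pr)
      = sum (vval K pr) (winners K pr \<inter> units_of a) + sum (vval K pr) (winners K pr - units_of a)"
    using sum.Int_Diff[OF finite_winners] by blast
  then show ?thesis unfolding charge_def optw_xall_eq_winners[OF v] sum_winners_Int_units_of[OF v]
    by simp
qed

lemma adv_util_eq:
  assumes v: "valid_prof K pr"
  shows "adv_util K vt pr a = real (nwin K pr a) * vt a - optw K pr (xall K pr - units_of a)
      + sum (vval K pr) (winners K pr - units_of a)"
  unfolding adv_util_def card_assign_to_eq_nwin[OF v] charge_eq[OF v] by simp

section \<open>Individual rationality and budget balance\<close>

lemma assigned_users_eq_hatP:
  assumes v: "valid_prof K pr" and m: "m \<in> Ms K"
  shows "assigned_users K pr m = hatP K pr m"
  unfolding assigned_users_def fst_assign_eq_items[OF v]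
    using mem_items_iff_hatP[OF _ m] hatP_subset by blast

lemma med_util_Some:
  assumes v: "valid_prof K pr" and m: "m \<in> Ms K" and s: "pm K pr m = Some q"
  shows "med_util K c pr m = (\<Sum>p\<in>hatP K pr m. rc pr q - c p)"
proof -
  have "cm K pr m = Some (rc pr q)" unfolding cm_def using s by simp
  then have "pay K pr m = rc pr q * real (card (hatP K pr m))"
    unfolding pay_def assigned_users_eq_hatP[OF v m] by simp
  then show ?thesis unfolding med_util_def assigned_users_eq_hatP[OF v m]
    by (simp add: sum_subtractf)
qed

lemma med_util_None:
  assumes v: "valid_prof K pr" and m: "m \<in> Ms K" and s: "pm K pr m = None"
  shows "med_util K c pr m = 0"
proof -
  have "cm K pr m = None" unfolding cm_def using s by simp
  then show ?thesis unfolding med_util_def pay_def assigned_users_eq_hatP[OF v m] hatP_None[OF s]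
    by simp
qed

lemma med_util_nonneg:
  assumes v: "valid_prof K pr" and m: "m \<in> Ms K" and t: "truthful_med K c pr m"
  shows "0 \<le> med_util K c pr m"
proof (cases "pm K pr m")
  case None
  then show ?thesis using med_util_None[OF v m] by simp
next
  case (Some q)
  have qU: "q \<in> Us K" using pm_Some(2)[OF v Some] reported_subset_users[OF v] by blast
  have "0 \<le> rc pr q - c p" if p: "p \<in> hatP K pr m" for p
  proof -
    have "user_key pr p < user_key pr q" using hatP_below_threshold[OF v Some p] .
    then have "rc pr p \<le> rc pr q" using rc_le_of_user_key_le by (meson less_imp_le)
    moreover have "rc pr p = c p" using t p hatP_subset unfolding truthful_med_def by blast
    ultimately show ?thesis by simp
  qed
  then show ?thesis unfolding med_util_Some[OF v m Some] by (intro sum_nonneg) auto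
qed

lemma adv_util_nonneg:
  assumes v: "valid_prof K pr" and t: "rv pr a = vt a"
  shows "0 \<le> adv_util K vt pr a"
proof -
  have fw: "finite (winners K pr)" by (rule finite_winners)
  have "optw K pr (xall K pr) = real (nwin K pr a) * rv pr a
      + sum (vval K pr) (winners K pr - units_of a)"
    unfolding optw_xall_eq_winners[OF v]
    using sum.Int_Diff[OF fw, of "vval K pr" "units_of a"] sum_winners_Int_units_of[OF v] by simp
  moreover have "optw K pr (xall K pr - units_of a) \<le> optw K pr (xall K pr)"
    using optw_mono[OF finite_xall] by blast
  ultimately show ?thesis unfolding adv_util_eq[OF v] using t by simp
qed

lemma card_winners_Diff_units_of:
  assumes v: "valid_prof K pr"
  shows "card (winners K pr - units_of a) + nwin K pr a = nitems K pr"
  using card_Int_Diff[OF finite_winners, of pr "units_of a"] card_winners_Int_units_of[OF v] card_winners by simp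

lemma nwin_dval_le_charge:
  assumes v: "valid_prof K pr"
  shows "real (nwin K pr a) * dval K pr \<le> charge K pr a"
proof -
  define D where "D = (DS ` {..<nwin K pr a} :: 'a vslot set)"
  have nle: "nwin K pr a \<le> nitems K pr" using card_winners_Diff_units_of[OF v, of a] by linarith
  have Dx: "D \<subseteq> xall K pr - units_of a" unfolding D_def xall_def using nle by auto
  have Dw: "D \<inter> (winners K pr - units_of a) = {}" unfolding D_def
    using DS_notin_winners[OF v] nle by force
  have cD: "card D = nwin K pr a" unfolding D_def by (subst card_image) (auto simp: inj_on_def)
  have finD: "finite D" unfolding D_def by simp
  have fW: "finite (winners K pr - units_of a)" using finite_winners by blast
  have "card ((winners K pr - units_of a) \<union> D) = nitems K pr"
    using card_Un_disjoint[OF fW finD] Dw cD card_winners_Diff_units_of[OF v, of a]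
    by (simp add: Int_commute)
  moreover have "(winners K pr - units_of a) \<union> D \<subseteq> xall K pr - units_of a"
    using Dx winners_def by auto
  ultimately have "sum (vval K pr) ((winners K pr - units_of a) \<union> D)
      \<le> optw K pr (xall K pr - units_of a)"
    using optw_ge[OF finite_Diff[OF finite_xall]] by simp
  moreover have "sum (vval K pr) ((winners K pr - units_of a) \<union> D)
      = sum (vval K pr) (winners K pr - units_of a) + sum (vval K pr) D"
    using sum.union_disjoint[OF fW finD] Dw by (simp add: Int_commute)
  moreover have "sum (vval K pr) D = real (nwin K pr a) * dval K pr"
    unfolding D_def by (subst sum.reindex) (auto simp: inj_on_def)
  ultimately show ?thesis unfolding charge_eq[OF v] by simp
qed

lemma sum_nwin:
  assumes v: "valid_prof K pr"
  shows "(\<Sum>a\<in>As K. nwin K pr a) = nitems K pr"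
proof -
  have "win_slots pr = (\<Union>a\<in>As K. {b\<in>win_slots pr. fst b = a})"
  proof
    show "win_slots pr \<subseteq> (\<Union>a\<in>As K. {b\<in>win_slots pr. fst b = a})"
    proof
      fix b assume b: "b \<in> win_slots pr"
      then have "fst b \<in> As K" using win_slots_subset mem_all_slots_iff by blast
      then show "b \<in> (\<Union>a\<in>As K. {b\<in>win_slots pr. fst b = a})" using b by blast
    qed
  qed auto
  then have "card (win_slots pr) = card (\<Union>a\<in>As K. {b\<in>win_slots pr. fst b = a})"
    by simp
  also have "\<dots> = (\<Sum>a\<in>As K. card {b\<in>win_slots pr. fst b = a})"
    by (rule card_UN_disjoint[OF finite_advertisers]) (use finite_subset[OF win_slots_subset finite_all_slots] in auto)
  finally have "card (win_slots pr) = (\<Sum>a\<in>As K. card {b\<in>win_slots pr. fst b = a})" .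
  then show ?thesis using card_win_slots[OF v] nwin_eq[OF v] by simp
qed

lemma budget_balanced_profile:
  assumes v: "valid_prof K pr"
  shows "(\<Sum>m\<in>Ms K. pay K pr m) \<le> (\<Sum>a\<in>As K. charge K pr a)"
proof (cases "nitems K pr = 0")
  case True
  then have "\<And>m. m \<in> Ms K \<Longrightarrow> hatP K pr m = {}"
    using nitems_sum[OF v] finite_hatP[OF v] finite_mediators by simp
  then have p0: "\<And>m. m \<in> Ms K \<Longrightarrow> pay K pr m = 0" unfolding pay_def
    using assigned_users_eq_hatP[OF v] by (auto split: option.splits)
  have "\<And>a. 0 \<le> charge K pr a"
    using nwin_dval_le_charge[OF v] card_winners_Diff_units_of[OF v] True
    by (metis add_is_0 mult_eq_0_iff of_nat_0)
  then show ?thesis using p0 by (simp add: sum_nonneg)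
next
  case False
  then have n: "0 < nitems K pr" by simp
  have d0: "0 \<le> dval K pr" using dval_nonneg[OF v n] .
  have "pay K pr m \<le> dval K pr * real (card (hatP K pr m))" if m: "m \<in> Ms K" for m
  proof (cases "cm K pr m")
    case None
    then show ?thesis unfolding pay_def using d0 by simp
  next
    case (Some x)
    then have "x \<le> dval K pr" using cm_le_dval[OF v m] by simp
    then show ?thesis unfolding pay_def Some assigned_users_eq_hatP[OF v m]
      by (simp add: mult_right_mono)
  qed
  then have "(\<Sum>m\<in>Ms K. pay K pr m) \<le> (\<Sum>m\<in>Ms K. dval K pr * real (card (hatP K pr m)))"
    by (rule sum_mono)
  also have "\<dots> = dval K pr * real (nitems K pr)"
    unfolding nitems_sum[OF v] by (simp add: sum_distrib_left)
  also have "\<dots> = (\<Sum>a\<in>As K. real (nwin K pr a) * dval K pr)"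
    unfolding sum_nwin[OF v, symmetric] by (simp add: sum_distrib_left mult.commute)
  also have "\<dots> \<le> (\<Sum>a\<in>As K. charge K pr a)" using nwin_dval_le_charge[OF v]
    by (rule sum_mono)
  finally show ?thesis .
qed

section \<open>Incentive compatibility\<close>

lemma canon_cong:
  assumes rv: "rv pr' = rv pr" and c: "\<And>p. p \<in> P \<Longrightarrow> rc pr' p = rc pr p \<and> rk pr' p = rk pr p"
  shows "canon K pr' P B = canon K pr P B" "\<And>p. p \<in> P \<Longrightarrow> upos K pr' P p = upos K pr P p"
proof -
  have ul: "user_less K pr' q p = user_less K pr q p" if "p \<in> P" "q \<in> P" for p q
    using c[OF that(1)] c[OF that(2)] unfolding user_less_def by simp
  show up: "\<And>p. p \<in> P \<Longrightarrow> upos K pr' P p = upos K pr P p"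
    unfolding upos_def using ul by (intro arg_cong[where f=card]) auto
  have sg: "slot_gt K pr' = slot_gt K pr"
  proof (intro ext)
    fix x y show "slot_gt K pr' x y = slot_gt K pr x y" using rv by (cases x, cases y) auto
  qed
  have sb: "slot_beats_user K pr' b p = slot_beats_user K pr b p" if "p \<in> P" for b p
    using c[OF that] rv by (cases b) auto
  show "canon K pr' P B = canon K pr P B"
    unfolding canon_def spos_def sg using up sb by auto
qed

lemma others_same_med_Pminus:
  assumes v: "valid_prof K pr" and v': "valid_prof K pr'" and o: "others_same_med K pr pr' m"
  shows "Pminus pr' m = Pminus pr m"
  using o reported_subset_users[OF v] reported_subset_users[OF v']
    unfolding others_same_med_def usersof_def by auto

lemma others_same_med_pm:
  assumes v: "valid_prof K pr" and v': "valid_prof K pr'" and o: "others_same_med K pr pr' m"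
  shows "pm K pr' m = pm K pr m"
proof -
  have P: "Pminus pr' m = Pminus pr m" using others_same_med_Pminus[OF v v' o] .
  have rv: "rv pr' = rv pr" using o unfolding others_same_med_def by blast
  have o2: "\<forall>p\<in>Us K. med K p \<noteq> m \<longrightarrow> (p \<in> rP pr' \<longleftrightarrow> p \<in> rP pr) \<and>
      (p \<in> rP pr \<longrightarrow> rc pr' p = rc pr p \<and> rk pr' p = rk pr p)"
    using o unfolding others_same_med_def by blast
  have c: "rc pr' p = rc pr p \<and> rk pr' p = rk pr p" if p: "p \<in> Pminus pr m" for p
  proof -
    have "p \<in> Us K" "med K p \<noteq> m" "p \<in> rP pr" using p reported_subset_users[OF v]
      unfolding usersof_def by auto
    then show ?thesis using o2 by blast
  qed
  have e: "(\<lambda>p. p \<in> Pminus pr m \<and> upos K pr' (Pminus pr m) p = X)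
      = (\<lambda>p. p \<in> Pminus pr m \<and> upos K pr (Pminus pr m) p = X)" for X
    using canon_cong(2)[where P="Pminus pr m", OF rv c] by auto
  have cc: "canon K pr' (Pminus pr m) all_slots = canon K pr (Pminus pr m) all_slots"
    by (rule canon_cong(1)[OF rv c])
  show ?thesis unfolding pm_def Let_def unfolding P unfolding cc unfolding e by simp
qed

lemma med_util_truthful_ge:
  assumes v: "valid_prof K pr" and v': "valid_prof K pr'" and m: "m \<in> Ms K"
    and t: "truthful_med K c pr m" and o: "others_same_med K pr pr' m"
  shows "med_util K c pr' m \<le> med_util K c pr m"
proof (cases "pm K pr m")
  case None
  then have "pm K pr' m = None" using others_same_med_pm[OF v v' o] by simp
  then show ?thesis using med_util_None[OF v' m] med_util_nonneg[OF v m t] by simp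
next
  case (Some q)
  have s': "pm K pr' m = Some q" using others_same_med_pm[OF v v' o] Some by simp
  have qP: "q \<in> Pminus pr m" using pm_Some(2)[OF v Some] .
  have rq: "rc pr' q = rc pr q"
    using o qP reported_subset_users[OF v] unfolding others_same_med_def usersof_def by auto
  define f where "f p = rc pr q - c p" for p
  have own: "p \<in> rP pr \<and> rc pr p = c p" if "p \<in> usersof K m" for p
    using t that unfolding truthful_med_def by blast
  have "sum f (hatP K pr' m) \<le> sum f (hatP K pr m)"
  proof (rule sum_le_sum_containing_positives[OF finite_usersof])
    show "hatP K pr' m \<subseteq> usersof K m" "hatP K pr m \<subseteq> usersof K m"
      using hatP_subset by blast+
    show "{p \<in> usersof K m. 0 < f p} \<subseteq> hatP K pr m"
      using own usersof_subset unfolding hatP_Some[OF Some] f_def user_less_def by auto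
    show "0 \<le> f p" if "p \<in> hatP K pr m" for p
      using hatP_below_threshold[OF v Some that] rc_le_of_user_key_le own hatP_subset that
      unfolding f_def by (fastforce dest: less_imp_le)
  qed
  then show ?thesis unfolding med_util_Some[OF v m Some] med_util_Some[OF v' m s'] rq f_def .
qed

lemma others_same_adv_sym: "others_same_adv pr pr' a \<Longrightarrow> others_same_adv pr' pr a"
  unfolding others_same_adv_def by auto

lemma others_same_adv_user_key: "others_same_adv prl prh a \<Longrightarrow> user_key prh = user_key prl"
  unfolding others_same_adv_def user_key_def by auto

lemma slot_beats_user_other_adv: "others_same_adv prl prh a \<Longrightarrow> fst b \<noteq> a
    \<Longrightarrow> slot_beats_user K prh b p = slot_beats_user K prl b p"
  unfolding others_same_adv_def slot_beats_user_iff by auto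

lemma slot_beats_user_value_mono: "others_same_adv prl prh a \<Longrightarrow> rv prl a \<le> rv prh a \<Longrightarrow> fst b = a \<Longrightarrow>
    slot_beats_user K prl b p \<Longrightarrow> slot_beats_user K prh b p"
  unfolding others_same_adv_def slot_beats_user_iff by auto

lemma slot_beats_user_same_adv:
  "fst b = a \<Longrightarrow> fst b' = a \<Longrightarrow> slot_beats_user K pr b p = slot_beats_user K pr b' p"
  unfolding slot_beats_user_iff by auto

lemma nbeating_value_mono:
  assumes "others_same_adv prl prh a" "rv prl a \<le> rv prh a"
  shows "nbeating prl p \<le> nbeating prh p"
  unfolding nbeating_def
proof (rule card_mono[OF finite_all_slots[THEN finite_subset[rotated]]])
  show "{b \<in> all_slots. slot_beats_user K prh b p} \<subseteq> all_slots" by blast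
  show "{b \<in> all_slots. slot_beats_user K prl b p} \<subseteq> {b \<in> all_slots. slot_beats_user K prh b p}"
  proof
    fix b assume h: "b \<in> {b \<in> all_slots. slot_beats_user K prl b p}"
    have "slot_beats_user K prh b p"
    proof (cases "fst b = a")
      case True
      then show ?thesis using slot_beats_user_value_mono[OF assms True] h by blast
    next
      case False
      then show ?thesis using slot_beats_user_other_adv[OF assms(1) False] h by blast
    qed
    then show "b \<in> {b \<in> all_slots. slot_beats_user K prh b p}" using h by blast
  qed
qed

lemma card_slots_single: "a \<in> As K \<Longrightarrow> card (slots K {a}) \<le> \<gamma>"
proof -
  assume a: "a \<in> As K"
  have "slots K {a} = (\<lambda>i. (a,i)) ` {..<cap K a}" unfolding slots_def by auto
  then have "card (slots K {a}) = cap K a" by (simp add: card_image inj_on_def)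
  then show ?thesis using cap_le_gamma a by auto
qed

lemma beating_slots_subset:
  assumes s: "others_same_adv prl prh a"
  shows "{b\<in>all_slots. slot_beats_user K prh b p} \<subseteq> {b\<in>all_slots. slot_beats_user K prl b p}
      \<union> slots K {a}"
proof
  fix b assume h: "b \<in> {b\<in>all_slots. slot_beats_user K prh b p}"
  show "b \<in> {b\<in>all_slots. slot_beats_user K prl b p} \<union> slots K {a}"
  proof (cases "fst b = a")
    case True
    then have "b \<in> slots K {a}" using h mem_all_slots_iff unfolding slots_def by (cases b) auto
    then show ?thesis by blast
  next
    case False
    then show ?thesis using slot_beats_user_other_adv[OF s False] h by blast
  qed
qed

lemma nbeating_le_plus_gamma:
  assumes s: "others_same_adv prl prh a" and a: "a \<in> As K"
  shows "nbeating prh p \<le> nbeating prl p + \<gamma>"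
proof -
  have "{b\<in>all_slots. slot_beats_user K prh b p} \<subseteq> {b\<in>all_slots. slot_beats_user K prl b p}
      \<union> slots K {a}"
    using beating_slots_subset[OF s] .
  then have "nbeating prh p \<le> card ({b\<in>all_slots. slot_beats_user K prl b p} \<union> slots K {a})"
    unfolding nbeating_def by (intro card_mono) (auto intro: finite_slots simp: finite_all_slots)
  also have "\<dots> \<le> nbeating prl p + card (slots K {a})" unfolding nbeating_def
    by (rule card_Un_le)
  finally show ?thesis using card_slots_single[OF a] by simp
qed

lemma others_same_adv_rP: "others_same_adv prl prh a \<Longrightarrow> rP prh = rP prl"
  unfolding others_same_adv_def by simp

lemma csize_value_mono:
  assumes vl: "valid_prof K prl" and vh: "valid_prof K prh" and s: "others_same_adv prl prh a"
    and le: "rv prl a \<le> rv prh a" and P: "P' \<subseteq> rP prl"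
  shows "csize prl P' \<le> csize prh P'"
proof -
  have Ph: "P' \<subseteq> rP prh" using P others_same_adv_rP[OF s] by simp
  have "canon_users prl P' \<subseteq> canon_users prh P'"
    unfolding canon_users_def others_same_adv_user_key[OF s]
    using nbeating_value_mono[OF s le] order_less_le_trans by fastforce
  then show ?thesis unfolding csize_eq_card_canon_users[OF vl P] csize_eq_card_canon_users[OF vh Ph]
    using finite_reported_subset[OF vh Ph] canon_users_def by (intro card_mono) auto
qed

lemma csize_le_plus_gamma:
  assumes vl: "valid_prof K prl" and vh: "valid_prof K prh" and s: "others_same_adv prl prh a"
    and a: "a \<in> As K" and P: "P' \<subseteq> rP prl"
  shows "csize prh P' \<le> csize prl P' + \<gamma>"
proof (rule ccontr)
  assume "\<not> ?thesis"
  then have lt: "csize prl P' + \<gamma> < csize prh P'" by simp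
  define L where "L = csize prh P'"
  define k where "k = L - \<gamma> - 1"
  have Ph: "P' \<subseteq> rP prh" using P others_same_adv_rP[OF s] by simp
  have fin: "finite P'" using finite_reported_subset[OF vl P] .
  have uk: "user_key prh = user_key prl" using others_same_adv_user_key[OF s] .
  have L1: "L - 1 < card P'" using csize_le_card[OF vh Ph] lt L_def by simp
  obtain p where p: "p \<in> P'" "urank prh P' p = L - 1"
      "L - 1 < csize prh P' \<longleftrightarrow> L - 1 < nbeating prh p"
    using obtain_user_of_rank[OF vh Ph L1] by blast
  have bp: "L - 1 < nbeating prh p" using p(3) L_def lt by simp
  have k1: "k < card P'" using L1 k_def by simp
  obtain q where q: "q \<in> P'" "urank prl P' q = k" "k < csize prl P' \<longleftrightarrow> k < nbeating prl q"
    using obtain_user_of_rank[OF vl P k1] by blast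
  have "\<not> user_key prl p < user_key prl q"
    using key_rank_less[OF fin p(1) q(1), of "user_key prl"] p(2) q(2) uk k_def by auto
  then have "user_key prl q \<le> user_key prl p" by simp
  then have "nbeating prl p \<le> nbeating prl q" using nbeating_antimono by blast
  moreover have "nbeating prh p \<le> nbeating prl p + \<gamma>"
    using nbeating_le_plus_gamma[OF s a] .
  ultimately have "k < csize prl P'" using q(3) bp k_def lt L_def by linarith
  then show False using lt k_def L_def by linarith
qed

lemma pm_eq_if_csize_eq:
  assumes vl: "valid_prof K prl" and vh: "valid_prof K prh" and s: "others_same_adv prl prh a"
    and e: "csize prl (Pminus prl m) = csize prh (Pminus prl m)"
  shows "pm K prl m = pm K prh m"
  using e unfolding pm_char[OF vl] pm_char[OF vh] others_same_adv_rP[OF s] others_same_adv_user_key[OF s] by simp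

text \<open>If raising the bid of a changes the threshold of m, some user p is counted in the canonical
  assignment without m under the high bid but not under the low one.\<close>

lemma threshold_change_pivot:
  assumes vl: "valid_prof K prl" and vh: "valid_prof K prh" and s: "others_same_adv prl prh a"
    and le: "rv prl a \<le> rv prh a" and a: "a \<in> As K" and m: "m \<in> Ms K"
    and ne: "pm K prl m \<noteq> pm K prh m"
  obtains p k where "nbeating prl p \<le> k" "k < nbeating prh p" "3 * \<gamma> < k"
    "csize prl (rP prl) \<le> k + \<gamma>" "csize prh (rP prh) \<le> k + 2 * \<gamma>"
proof -
  define P where "P = Pminus prl m"
  have PP: "P \<subseteq> rP prl" and Ph: "P \<subseteq> rP prh" unfolding P_def
    using others_same_adv_rP[OF s] by auto
  have uk: "user_key prh = user_key prl" using others_same_adv_user_key[OF s] .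
  define k where "k = csize prl P"
  have "csize prl P \<noteq> csize prh P" using pm_eq_if_csize_eq[OF vl vh s] ne P_def by blast
  then have kh: "k < csize prh P" using csize_value_mono[OF vl vh s le PP] k_def by simp
  have "4 * \<gamma> < csize prh P"
  proof (rule ccontr)
    assume "\<not> 4 * \<gamma> < csize prh P"
    then have "pm K prh m = None" "pm K prl m = None"
      using pm_None[OF vh] pm_None[OF vl] others_same_adv_rP[OF s] kh P_def k_def by auto
    then show False using ne by simp
  qed
  then have k3: "3 * \<gamma> < k" using csize_le_plus_gamma[OF vl vh s a PP] k_def by linarith
  have kc: "k < card P" using csize_le_card[OF vh Ph] kh by simp
  obtain p where p: "p \<in> P" "urank prl P p = k" "k < csize prl P \<longleftrightarrow> k < nbeating prl p"
    using obtain_user_of_rank[OF vl PP kc] by blast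
  have "k < nbeating prh p" using urank_less_csize_iff[OF vh Ph p(1)] p(2) uk kh by simp
  moreover have "nbeating prl p \<le> k" using p(3) k_def by simp
  moreover have Ll: "csize prl (rP prl) \<le> k + \<gamma>"
    using csize_le_remove[OF vl PP subset_refl card_reported_Diff_Pminus[OF m, of prl, folded P_def]] k_def
    by simp
  moreover have "csize prh (rP prh) \<le> k + 2 * \<gamma>"
    using csize_le_plus_gamma[OF vl vh s a subset_refl] Ll others_same_adv_rP[OF s] by simp
  ultimately show ?thesis using that k3 by blast
qed

lemma no_slot_of_bidder_beats_pivot:
  assumes s: "others_same_adv prl prh a" and lt: "nbeating prl p < nbeating prh p"
    and b: "fst b = a"
  shows "\<not> slot_beats_user K prl b p"
proof
  assume h: "slot_beats_user K prl b p"
  have "{b\<in>all_slots. slot_beats_user K prh b p} \<subseteq> {b\<in>all_slots. slot_beats_user K prl b p}"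
  proof
    fix b' assume b': "b' \<in> {b\<in>all_slots. slot_beats_user K prh b p}"
    show "b' \<in> {b\<in>all_slots. slot_beats_user K prl b p}"
    proof (cases "fst b' = a")
      case True
      then show ?thesis using b' h slot_beats_user_same_adv[OF True b] by auto
    next
      case False
      then show ?thesis using b' slot_beats_user_other_adv[OF s False] by auto
    qed
  qed
  then have "nbeating prh p \<le> nbeating prl p" unfolding nbeating_def using finite_all_slots
    by (intro card_mono) auto
  then show False using lt by simp
qed

lemma threshold_change_witness:
  assumes vl: "valid_prof K prl" and vh: "valid_prof K prh" and s: "others_same_adv prl prh a"
    and le: "rv prl a \<le> rv prh a" and a: "a \<in> As K" and m: "m \<in> Ms K"
    and ne: "pm K prl m \<noteq> pm K prh m"
  obtains Ob where "Ob \<subseteq> all_slots" "\<And>b. b \<in> Ob \<Longrightarrow> fst b \<noteq> a"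
    "nitems K prl < card Ob" "nitems K prh < card Ob"
    "\<And>b. b \<in> Ob \<Longrightarrow> rv prl a \<le> rv prl (fst b)"
    "\<And>b i. b \<in> Ob \<Longrightarrow> slot_key prl b < slot_key prl (a,i)"
proof -
  obtain p k where p: "nbeating prl p \<le> k" "k < nbeating prh p" "3 * \<gamma> < k"
    "csize prl (rP prl) \<le> k + \<gamma>" "csize prh (rP prh) \<le> k + 2 * \<gamma>"
    using threshold_change_pivot[OF vl vh s le a m ne] .
  have nba: "\<not> slot_beats_user K prl b p" if "fst b = a" for b
    using no_slot_of_bidder_beats_pivot[OF s _ that] p(1,2) by simp
  define Ob where "Ob = {b\<in>all_slots. slot_beats_user K prl b p}"
  have Ob1: "Ob \<subseteq> all_slots" and Ob2: "\<And>b. b \<in> Ob \<Longrightarrow> fst b \<noteq> a" using nba Ob_def by auto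
  have "nbeating prh p \<le> card (Ob \<union> slots K {a})"
    unfolding nbeating_def Ob_def using beating_slots_subset[OF s] finite_all_slots
    by (intro card_mono) (auto intro: finite_slots)
  also have "\<dots> \<le> card Ob + \<gamma>"
    using card_Un_le[of Ob "slots K {a}"] card_slots_single[OF a] by linarith
  finally have cO: "k + 1 \<le> card Ob + \<gamma>" using p(2) by simp
  have "nitems K prl < card Ob" using nitems_bound[OF vl] p(3,4) cO by (elim disjE) linarith+
  moreover have "nitems K prh < card Ob" using nitems_bound[OF vh] p(3,5) cO
    by (elim disjE) linarith+
  moreover have "rv prl a \<le> rv prl (fst b)" if b: "b \<in> Ob" for b
  proof -
    have "rv prl a \<le> rc prl p" using nba[of "(a,0)"] unfolding slot_beats_user_iff by auto
    also have "\<dots> \<le> rv prl (fst b)" using b unfolding Ob_def slot_beats_user_iff by auto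
    finally show ?thesis .
  qed
  moreover have "slot_key prl b < slot_key prl (a,i)" if b: "b \<in> Ob" for b i
  proof -
    have "fst b \<noteq> a" "fst b \<in> As K" using Ob1 Ob2 b mem_all_slots_iff by blast+
    then have "rnk K (Inr (fst b)) \<noteq> rnk K (Inr a)" using rnk_Inr_inj a by blast
    then have "slot_key prl b \<noteq> slot_key prl (a,i)" unfolding slot_key_def by auto
    moreover have "\<not> slot_key prl (a,i) < slot_key prl b"
      using slot_beats_user_higher[of prl "(a,i)" b p] b nba[of "(a,i)"] unfolding Ob_def by auto
    ultimately show ?thesis by simp
  qed
  ultimately show ?thesis using that Ob1 Ob2 by blast
qed

lemma adv_util_truthful:
  assumes v: "valid_prof K pr" and t: "rv pr a = vt a"
  shows "adv_util K vt pr a = optw K pr (xall K pr) - optw K pr (xall K pr - units_of a)"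
proof -
  have "optw K pr (xall K pr) = real (nwin K pr a) * rv pr a
      + sum (vval K pr) (winners K pr - units_of a)"
    unfolding optw_xall_eq_winners[OF v]
    using sum.Int_Diff[OF finite_winners, of "vval K pr" pr "units_of a"] sum_winners_Int_units_of[OF v] by simp
  then show ?thesis unfolding adv_util_eq[OF v] using t by simp
qed

lemma same_thresholds_auction_eq:
  assumes s: "others_same_adv pr pr' a" and same: "\<forall>m\<in>Ms K. pm K pr m = pm K pr' m"
  shows "nitems K pr' = nitems K pr" "xall K pr' = xall K pr"
    "\<And>x. x \<in> xall K pr - units_of a \<Longrightarrow> vval K pr' x = vval K pr x"
proof -
  have rP: "rP pr' = rP pr" and rc: "rc pr' = rc pr" and ul: "user_less K pr' = user_less K pr"
    using s unfolding others_same_adv_def by (auto intro!: ext simp: user_less_def)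
  have "items K pr' = items K pr" unfolding items_def hatP_def rP ul using same by auto
  then show n: "nitems K pr' = nitems K pr" unfolding nitems_def by simp
  then show xa: "xall K pr' = xall K pr" unfolding xall_def by simp
  have "dval K pr' = dval K pr" unfolding dval_def cm_def rc using same
    by (metis (no_types, lifting))
  then show "vval K pr' x = vval K pr x" if "x \<in> xall K pr - units_of a" for x
  proof (cases x)
    case (RS b)
    then have "fst b \<noteq> a" using that mem_xall_iff[of x pr] mem_all_slots_iff
      unfolding slots_def by (cases b) auto
    then show ?thesis using RS s unfolding others_same_adv_def by (cases b) auto
  qed simp
qed

lemma optw_cong:
  assumes "nitems K pr' = nitems K pr" and "\<And>x. x \<in> Y \<Longrightarrow> vval K pr' x = vval K pr x"
  shows "optw K pr' Y = optw K pr Y"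
proof -
  have "(\<lambda>Z. \<Sum>z\<in>Z. vval K pr' z) ` {Z. Z \<subseteq> Y \<and> card Z \<le> nitems K pr'} =
        (\<lambda>Z. \<Sum>z\<in>Z. vval K pr z) ` {Z. Z \<subseteq> Y \<and> card Z \<le> nitems K pr}"
    using assms by (intro image_cong) (auto intro!: sum.cong)
  then show ?thesis unfolding optw_def by simp
qed

text \<open>With the thresholds fixed the auction is plain VCG, in which a truthful bid is optimal.\<close>

lemma adv_util_le_same_thresholds:
  assumes v: "valid_prof K pr" and v': "valid_prof K pr'" and t: "rv pr a = vt a"
    and s: "others_same_adv pr pr' a" and same: "\<forall>m\<in>Ms K. pm K pr m = pm K pr' m"
  shows "adv_util K vt pr' a \<le> adv_util K vt pr a"
proof -
  note eq = same_thresholds_auction_eq[OF s same]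
  define W where "W = winners K pr'"
  have Wx: "W \<subseteq> xall K pr" unfolding W_def using winners_subset_xall eq(2) by blast
  have fW: "finite W" unfolding W_def by (rule finite_winners)
  have "sum (vval K pr) (W \<inter> units_of a) = sum (\<lambda>x. vt a) (W \<inter> units_of a)"
    using t unfolding slots_def by (intro sum.cong) auto
  then have "sum (vval K pr) (W \<inter> units_of a) = real (nwin K pr' a) * vt a"
    using card_winners_Int_units_of[OF v'] W_def by simp
  moreover have "sum (vval K pr) (W - units_of a) = sum (vval K pr') (W - units_of a)"
    using eq(3) Wx by (intro sum.cong) auto
  moreover have "sum (vval K pr) W = sum (vval K pr) (W \<inter> units_of a)
      + sum (vval K pr) (W - units_of a)"
    using sum.Int_Diff[OF fW] by blast
  moreover have "sum (vval K pr) W \<le> optw K pr (xall K pr)"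
    using optw_ge[OF finite_xall Wx] card_winners eq(1) W_def by simp
  ultimately have "real (nwin K pr' a) * vt a + sum (vval K pr') (W - units_of a)
      \<le> optw K pr (xall K pr)"
    by simp
  moreover have "optw K pr' (xall K pr - units_of a) = optw K pr (xall K pr - units_of a)"
    using optw_cong eq(1,3) by blast
  ultimately show ?thesis
    unfolding adv_util_truthful[where vt=vt, OF v t] adv_util_eq[OF v'] W_def[symmetric] eq(2)
    by simp
qed

lemma adv_util_nonpos_if_replaceable:
  assumes v: "valid_prof K pr" and D: "D \<subseteq> xall K pr - units_of a - winners K pr"
    and cD: "card D = nwin K pr a" and Dv: "\<And>x. x \<in> D \<Longrightarrow> vt a \<le> vval K pr x"
  shows "adv_util K vt pr a \<le> 0"
proof -
  define W where "W = winners K pr - units_of a"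
  have fW: "finite W" using finite_winners W_def by simp
  have finD: "finite D" by (rule finite_subset[OF D]) (simp add: finite_xall)
  have DW: "W \<inter> D = {}" using D W_def by blast
  have card: "card (W \<union> D) \<le> nitems K pr"
    using card_Un_disjoint[OF fW finD DW] cD card_winners_Diff_units_of[OF v, of a] W_def by simp
  have sub: "W \<union> D \<subseteq> xall K pr - units_of a" using D winners_subset_xall W_def
    by blast
  have "sum (vval K pr) W + sum (vval K pr) D \<le> optw K pr (xall K pr - units_of a)"
    using optw_ge[OF finite_Diff[OF finite_xall] sub card] sum.union_disjoint[OF fW finD DW, of "vval K pr"] by simp
  moreover have "real (nwin K pr a) * vt a \<le> sum (vval K pr) D"
    using sum_bounded_below[of D "vt a" "vval K pr"] Dv cD by simp
  ultimately show ?thesis unfolding adv_util_eq[OF v] W_def by simp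
qed

lemma adv_util_le_lower_bid:
  assumes v: "valid_prof K pr" and v': "valid_prof K pr'" and t: "rv pr a = vt a"
    and s: "others_same_adv pr' pr a" and lt: "rv pr' a \<le> rv pr a" and a: "a \<in> As K"
    and m: "m \<in> Ms K" and ne: "pm K pr' m \<noteq> pm K pr m"
  shows "adv_util K vt pr' a \<le> adv_util K vt pr a"
proof -
  obtain Ob where Ob: "Ob \<subseteq> all_slots" "\<And>b. b \<in> Ob \<Longrightarrow> fst b \<noteq> a"
    "nitems K pr' < card Ob" "nitems K pr < card Ob"
    "\<And>b. b \<in> Ob \<Longrightarrow> rv pr' a \<le> rv pr' (fst b)"
    "\<And>b i. b \<in> Ob \<Longrightarrow> slot_key pr' b < slot_key pr' (a,i)"
    using threshold_change_witness[OF v' v s lt a m ne] by blast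
  have "winners K pr' \<inter> units_of a = {}"
  proof (rule ccontr)
    assume "winners K pr' \<inter> units_of a \<noteq> {}"
    then obtain i where w: "RS (a,i) \<in> winners K pr'" unfolding slots_def by auto
    have "RS ` Ob \<subseteq> {y\<in>xall K pr'. unit_key pr' y < unit_key pr' (RS (a,i))}"
      using Ob(1,6) mem_xall_iff unit_key_RS_less_iff by auto
    then have "card (RS ` Ob) \<le> key_rank (unit_key pr') (xall K pr') (RS (a,i))"
      unfolding key_rank_def using finite_xall by (intro card_mono) auto
    moreover have "card (RS ` Ob) = card Ob" by (simp add: card_image inj_on_def)
    moreover have "key_rank (unit_key pr') (xall K pr') (RS (a,i)) < nitems K pr'"
      using w winners_eq_key_rank by auto
    ultimately show False using Ob(3) by simp
  qed
  then have "nwin K pr' a = 0" using card_winners_Int_units_of[OF v', of a] by simp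
  then have "adv_util K vt pr' a \<le> 0" using adv_util_nonpos_if_replaceable[OF v', of "{}"]
    by simp
  then show ?thesis using adv_util_nonneg[where vt=vt, OF v t] by simp
qed

lemma adv_util_le_higher_bid:
  assumes v: "valid_prof K pr" and v': "valid_prof K pr'" and t: "rv pr a = vt a"
    and s: "others_same_adv pr pr' a" and le: "rv pr a \<le> rv pr' a" and a: "a \<in> As K"
    and m: "m \<in> Ms K" and ne: "pm K pr m \<noteq> pm K pr' m"
  shows "adv_util K vt pr' a \<le> adv_util K vt pr a"
proof -
  obtain Ob where Ob: "Ob \<subseteq> all_slots" "\<And>b. b \<in> Ob \<Longrightarrow> fst b \<noteq> a"
    "nitems K pr < card Ob" "nitems K pr' < card Ob"
    "\<And>b. b \<in> Ob \<Longrightarrow> rv pr a \<le> rv pr (fst b)"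
    "\<And>b i. b \<in> Ob \<Longrightarrow> slot_key pr b < slot_key pr (a,i)"
    using threshold_change_witness[OF v v' s le a m ne] by blast
  define W where "W = winners K pr' - units_of a"
  have RO: "RS ` Ob \<subseteq> xall K pr' - units_of a" using Ob(1,2) unfolding xall_def slots_def
    by fastforce
  have "card (RS ` Ob) - card W \<le> card (RS ` Ob - W)"
    using finite_winners W_def by (intro diff_card_le_card_Diff) auto
  moreover have "card (RS ` Ob) = card Ob" by (simp add: card_image inj_on_def)
  moreover have "card W + nwin K pr' a = nitems K pr'"
    using card_winners_Diff_units_of[OF v'] W_def by simp
  ultimately have "nwin K pr' a \<le> card (RS ` Ob - W)" using Ob(4) by linarith
  then obtain D where D: "D \<subseteq> RS ` Ob - W" "card D = nwin K pr' a"
    by (rule obtain_subset_with_card_n)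
  have "D \<subseteq> xall K pr' - units_of a - winners K pr'" using D RO W_def by blast
  moreover have "vt a \<le> vval K pr' x" if x: "x \<in> D" for x
  proof -
    obtain b where b: "b \<in> Ob" "x = RS b" using x D by blast
    have "rv pr' (fst b) = rv pr (fst b)" using s Ob(2)[OF b(1)] unfolding others_same_adv_def
      by auto
    then show ?thesis using Ob(5)[OF b(1)] t b(2) by (cases b) auto
  qed
  ultimately have "adv_util K vt pr' a \<le> 0" using adv_util_nonpos_if_replaceable[OF v'] D(2)
    by blast
  then show ?thesis using adv_util_nonneg[where vt=vt, OF v t] by simp
qed

lemma adv_util_truthful_ge:
  assumes v: "valid_prof K pr" and v': "valid_prof K pr'" and a: "a \<in> As K"
    and t: "truthful_adv vt pr a" and o: "others_same_adv pr pr' a"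
  shows "adv_util K vt pr' a \<le> adv_util K vt pr a"
proof -
  have t': "rv pr a = vt a" using t unfolding truthful_adv_def .
  have o': "others_same_adv pr' pr a" using o by (rule others_same_adv_sym)
  show ?thesis
  proof (cases "\<forall>m\<in>Ms K. pm K pr m = pm K pr' m")
    case True
    then show ?thesis using adv_util_le_same_thresholds[where vt=vt, OF v v' t' o] by blast
  next
    case False
    then obtain m where m: "m \<in> Ms K" "pm K pr m \<noteq> pm K pr' m" by blast
    show ?thesis
    proof (cases "rv pr a \<le> rv pr' a")
      case True
      then show ?thesis using adv_util_le_higher_bid[where vt=vt, OF v v' t' o True a m(1)] m(2)
        by blast
    next
      case False
      then show ?thesis using adv_util_le_lower_bid[where vt=vt, OF v v' t' o' _ a m(1)] m(2)
        by simp
    qed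
  qed
qed

section \<open>Competitiveness\<close>

definition user_at :: "('u,'a) prof \<Rightarrow> nat \<Rightarrow> 'u" where
  "user_at pr i = (THE p. p \<in> rP pr \<and> urank pr (rP pr) p = i)"

definition slot_at :: "('u,'a) prof \<Rightarrow> nat \<Rightarrow> 'a \<times> nat" where
  "slot_at pr i = (THE b. b \<in> all_slots \<and> srank pr b = i)"

definition gain_at :: "('u,'a) prof \<Rightarrow> nat \<Rightarrow> real" where
  "gain_at pr i = rv pr (fst (slot_at pr i)) - rc pr (user_at pr i)"

lemma user_at:
  assumes v: "valid_prof K pr" and i: "i < card (rP pr)"
  shows "user_at pr i \<in> rP pr" "urank pr (rP pr) (user_at pr i) = i"
proof -
  have "\<exists>!p. p \<in> rP pr \<and> urank pr (rP pr) p = i"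
    using key_rank_ex1[OF finite_reported[OF v] inj_on_user_key[OF v] i] .
  then have "user_at pr i \<in> rP pr \<and> urank pr (rP pr) (user_at pr i) = i"
    unfolding user_at_def by (rule theI')
  then show "user_at pr i \<in> rP pr" "urank pr (rP pr) (user_at pr i) = i" by auto
qed

lemma user_at_urank:
  assumes v: "valid_prof K pr" and p: "p \<in> rP pr"
  shows "user_at pr (urank pr (rP pr) p) = p"
proof -
  have i: "urank pr (rP pr) p < card (rP pr)" using key_rank_less_card[OF finite_reported[OF v] p] .
  show ?thesis
    using user_at[OF v i] key_rank_eq_iff[OF finite_reported[OF v] inj_on_user_key[OF v]] p by blast
qed

lemma slot_at:
  assumes i: "i < card all_slots"
  shows "slot_at pr i \<in> all_slots" "srank pr (slot_at pr i) = i"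
proof -
  have "\<exists>!b. b \<in> all_slots \<and> srank pr b = i"
    using key_rank_ex1[OF finite_all_slots inj_on_slot_key i] .
  then have "slot_at pr i \<in> all_slots \<and> srank pr (slot_at pr i) = i"
    unfolding slot_at_def by (rule theI')
  then show "slot_at pr i \<in> all_slots" "srank pr (slot_at pr i) = i"
    by auto
qed

lemma slot_at_key_rank:
  assumes b: "b \<in> all_slots"
  shows "slot_at pr (srank pr b) = b"
proof -
  have i: "srank pr b < card all_slots"
    using key_rank_less_card[OF finite_all_slots b] .
  show ?thesis using slot_at[OF i] key_rank_eq_iff[OF finite_all_slots inj_on_slot_key] b by blast
qed

lemma rc_user_at_mono:
  assumes v: "valid_prof K pr" and ij: "i \<le> j" "j < card (rP pr)"
  shows "rc pr (user_at pr i) \<le> rc pr (user_at pr j)"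
proof -
  have i: "i < card (rP pr)" using ij by simp
  have "\<not> user_key pr (user_at pr j) < user_key pr (user_at pr i)"
    using key_rank_less[OF finite_reported[OF v] user_at(1)[OF v ij(2)] user_at(1)[OF v i], of "user_key pr"]
      user_at(2)[OF v ij(2)] user_at(2)[OF v i] ij by auto
  then have "user_key pr (user_at pr i) \<le> user_key pr (user_at pr j)" by simp
  then show ?thesis by (rule rc_le_of_user_key_le)
qed

lemma rv_slot_at_antimono:
  assumes ij: "i \<le> j" "j < card all_slots"
  shows "rv pr (fst (slot_at pr j)) \<le> rv pr (fst (slot_at pr i))"
proof -
  have i: "i < card all_slots" using ij by simp
  have "\<not> slot_key pr (slot_at pr j) < slot_key pr (slot_at pr i)"
    using key_rank_less[OF finite_all_slots slot_at(1)[OF ij(2), of pr] slot_at(1)[OF i, of pr], of "slot_key pr"]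
      slot_at(2)[OF ij(2), of pr] slot_at(2)[OF i, of pr] ij by auto
  then have "slot_key pr (slot_at pr i) \<le> slot_key pr (slot_at pr j)" by simp
  then show ?thesis by (rule rv_le_of_slot_key_le)
qed

lemma csize_le_cards:
  assumes v: "valid_prof K pr"
  shows "csize pr (rP pr) \<le> card (rP pr)" "csize pr (rP pr) \<le> card all_slots"
proof -
  show "csize pr (rP pr) \<le> card (rP pr)" using csize_le_card[OF v subset_refl] .
  show "csize pr (rP pr) \<le> card all_slots"
  proof (rule ccontr)
    assume "\<not> ?thesis"
    then have lt: "card all_slots < csize pr (rP pr)" by simp
    then have c: "card all_slots < card (rP pr)" using csize_le_card[OF v subset_refl] by simp
    have "card all_slots < nbeating pr (user_at pr (card all_slots))"
      using urank_less_csize_iff[OF v subset_refl user_at(1)[OF v c]] user_at(2)[OF v c] lt by simp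
    then show False using nbeating_le by (metis not_le)
  qed
qed

lemma gain_at_nonneg:
  assumes v: "valid_prof K pr" and i: "i < csize pr (rP pr)"
  shows "0 \<le> gain_at pr i"
proof -
  have ip: "i < card (rP pr)" and iS: "i < card all_slots" using csize_le_cards[OF v] i by auto
  have "i < nbeating pr (user_at pr i)"
    using urank_less_csize_iff[OF v subset_refl user_at(1)[OF v ip]] user_at(2)[OF v ip] i by simp
  then have "slot_beats_user K pr (slot_at pr i) (user_at pr i)"
    using slot_beats_user_iff_rank[OF slot_at(1)[OF iS, of pr]] slot_at(2)[OF iS, of pr] by simp
  then show ?thesis unfolding gain_at_def slot_beats_user_iff by auto
qed

lemma gain_at_nonpos:
  assumes v: "valid_prof K pr" and i: "csize pr (rP pr) \<le> i" "i < card (rP pr)" "i < card all_slots"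
  shows "gain_at pr i \<le> 0"
proof -
  have "\<not> i < nbeating pr (user_at pr i)"
    using urank_less_csize_iff[OF v subset_refl user_at(1)[OF v i(2)]] user_at(2)[OF v i(2)] i
    by simp
  then have "\<not> slot_beats_user K pr (slot_at pr i) (user_at pr i)"
    using slot_beats_user_iff_rank[OF slot_at(1)[OF i(3), of pr]] slot_at(2)[OF i(3), of pr] by simp
  then show ?thesis unfolding gain_at_def slot_beats_user_iff by auto
qed

lemma gain_at_antimono:
  assumes v: "valid_prof K pr" and ij: "i \<le> j" "j < csize pr (rP pr)"
  shows "gain_at pr j \<le> gain_at pr i"
proof -
  have "j < card (rP pr)" "j < card all_slots" using csize_le_cards[OF v] ij by auto
  then show ?thesis unfolding gain_at_def
    using rc_user_at_mono[OF v ij(1)] rv_slot_at_antimono[OF ij(1)] by smt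
qed

lemma top_slots_eq:
  assumes k: "k \<le> card all_slots"
  shows "{b\<in>all_slots. srank pr b < k} = slot_at pr ` {..<k}"
proof
  show "{b\<in>all_slots. srank pr b < k} \<subseteq> slot_at pr ` {..<k}"
    using slot_at_key_rank by (metis (no_types, lifting) imageI lessThan_iff mem_Collect_eq subsetI)
  show "slot_at pr ` {..<k} \<subseteq> {b\<in>all_slots. srank pr b < k}"
    using slot_at k by auto
qed

lemma top_users_eq:
  assumes v: "valid_prof K pr" and k: "k \<le> card (rP pr)"
  shows "{p\<in>rP pr. urank pr (rP pr) p < k} = user_at pr ` {..<k}"
proof
  show "{p\<in>rP pr. urank pr (rP pr) p < k} \<subseteq> user_at pr ` {..<k}"
    using user_at_urank[OF v]
    by (metis (no_types, lifting) imageI lessThan_iff mem_Collect_eq subsetI)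
  show "user_at pr ` {..<k} \<subseteq> {p\<in>rP pr. urank pr (rP pr) p < k}"
    using user_at[OF v] k by auto
qed

lemma inj_on_slot_at: "k \<le> card all_slots \<Longrightarrow> inj_on (slot_at pr) {..<k}"
  by (intro inj_onI) (metis lessThan_iff order_less_le_trans slot_at(2))

lemma inj_on_user_at: "valid_prof K pr \<Longrightarrow> k \<le> card (rP pr) \<Longrightarrow> inj_on (user_at pr) {..<k}"
  by (intro inj_onI) (metis lessThan_iff order_less_le_trans user_at(2))

lemma rc_le_dval_of_item:
  assumes v: "valid_prof K pr" and p: "p \<in> items K pr"
  shows "rc pr p \<le> dval K pr"
proof -
  obtain m where m: "m \<in> Ms K" "p \<in> hatP K pr m" using p unfolding items_def by blast
  then obtain q where q: "pm K pr m = Some q" using hatP_None by (cases "pm K pr m") auto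
  have "rc pr p \<le> rc pr q"
    using hatP_below_threshold[OF v q m(2)] rc_le_of_user_key_le less_imp_le by blast
  also have "\<dots> \<le> dval K pr" using cm_le_dval[OF v m(1)] q unfolding cm_def by simp
  finally show ?thesis .
qed

lemma dval_le_win_slot_value:
  assumes v: "valid_prof K pr" and b: "b \<in> win_slots pr"
  shows "dval K pr \<le> rv pr (fst b)"
proof -
  have n: "0 < nitems K pr" using b unfolding win_slots_def by auto
  have w: "RS b \<in> winners K pr" using winners_eq_win_slots[OF v] b by auto
  then have wx: "RS b \<in> xall K pr" using winners_subset_xall by blast
  have d: "DS 0 \<in> xall K pr" using n mem_xall_iff by auto
  have "key_rank (unit_key pr) (xall K pr) (RS b) < key_rank (unit_key pr) (xall K pr) (DS 0)"
    using w d DS_notin_winners[OF v n] winners_eq_key_rank by auto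
  then have "unit_key pr (RS b) < unit_key pr (DS 0)"
    using key_rank_less_iff[OF finite_xall wx d, of "unit_key pr"] by simp
  then have "fst (unit_key pr (RS b)) \<le> fst (unit_key pr (DS 0))"
    using fst_le_of_lex_le less_imp_le by blast
  then show ?thesis unfolding fst_unit_key by (cases b) simp
qed

lemma rc_le_rv_of_assign:
  assumes v: "valid_prof K pr" and x: "(p,b) \<in> assign K pr"
  shows "rc pr p \<le> rv pr (fst b)"
proof -
  have "p \<in> items K pr" and "b \<in> win_slots pr" using x assign_eq_key_rank[OF v] by auto
  then show ?thesis using rc_le_dval_of_item[OF v] dval_le_win_slot_value[OF v] order_trans by blast
qed

lemma truthful_profile:
  assumes v: "valid_prof K pr" and tm: "\<forall>m\<in>Ms K. truthful_med K c pr m"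
    and ta: "\<forall>a\<in>As K. truthful_adv vt pr a"
  shows "rP pr = Us K" "\<And>p. p \<in> Us K \<Longrightarrow> rc pr p = c p" "\<And>a. a \<in> As K \<Longrightarrow> rv pr a = vt a"
proof -
  have own: "p \<in> rP pr \<and> rc pr p = c p" if p: "p \<in> Us K" for p
    using tm med_in_mediators[OF p] p unfolding truthful_med_def usersof_def by blast
  then show "rP pr = Us K" using reported_subset_users[OF v] by blast
  show "\<And>p. p \<in> Us K \<Longrightarrow> rc pr p = c p" using own by blast
  show "\<And>a. a \<in> As K \<Longrightarrow> rv pr a = vt a" using ta unfolding truthful_adv_def
    by blast
qed

lemma assign_gain_nonneg:
  assumes v: "valid_prof K pr" and tm: "\<forall>m\<in>Ms K. truthful_med K c pr m"
    and ta: "\<forall>a\<in>As K. truthful_adv vt pr a" and x: "x \<in> assign K pr"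
  shows "c (fst x) \<le> vt (fst (snd x))"
proof -
  note tf = truthful_profile[OF v tm ta]
  obtain p b where pb: "x = (p,b)" by (cases x)
  have "p \<in> items K pr" "b \<in> all_slots" using x pb assign_eq_key_rank[OF v] win_slots_subset
    by auto
  then have "p \<in> Us K" "fst b \<in> As K" using items_subset tf(1) mem_all_slots_iff by auto
  then show ?thesis using rc_le_rv_of_assign[OF v x[unfolded pb]] pb tf by simp
qed

lemma sum_values_le_top_slots:
  assumes B': "B' \<subseteq> all_slots" and k: "card B' = k"
  shows "(\<Sum>b\<in>B'. rv pr (fst b)) \<le> (\<Sum>i<k. rv pr (fst (slot_at pr i)))"
proof -
  have kS: "k \<le> card all_slots" using card_mono[OF finite_all_slots B'] k by simp
  have "(\<Sum>b\<in>B'. rv pr (fst b))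
      \<le> (\<Sum>b\<in>{b\<in>all_slots. srank pr b < k}. rv pr (fst b))"
    using k kS rv_le_of_slot_key_le less_imp_le
    by (intro sum_le_sum_top_ranked[OF finite_all_slots inj_on_slot_key _ B']) auto
  also have "\<dots> = (\<Sum>i<k. rv pr (fst (slot_at pr i)))"
    unfolding top_slots_eq[OF kS] by (simp add: sum.reindex[OF inj_on_slot_at[OF kS]])
  finally show ?thesis .
qed

lemma sum_costs_ge_cheapest:
  assumes v: "valid_prof K pr" and P': "P' \<subseteq> rP pr" and k: "card P' = k"
  shows "(\<Sum>i<k. rc pr (user_at pr i)) \<le> (\<Sum>p\<in>P'. rc pr p)"
proof -
  have kP: "k \<le> card (rP pr)" using card_mono[OF finite_reported[OF v] P'] k by simp
  have "(\<Sum>p\<in>P'. - rc pr p) \<le> (\<Sum>p\<in>{p\<in>rP pr. urank pr (rP pr) p < k}. - rc pr p)"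
    using k kP rc_le_of_user_key_le less_imp_le
    by (intro sum_le_sum_top_ranked[OF finite_reported[OF v] inj_on_user_key[OF v] _ P']) auto
  also have "\<dots> = (\<Sum>i<k. - rc pr (user_at pr i))"
    unfolding top_users_eq[OF v kP] by (simp add: sum.reindex[OF inj_on_user_at[OF v kP]])
  finally show ?thesis by (simp add: sum_negf)
qed

lemma sum_gain_at_le_csize:
  assumes v: "valid_prof K pr" and k: "k \<le> card (rP pr)" "k \<le> card all_slots"
  shows "sum (gain_at pr) {..<k} \<le> sum (gain_at pr) {..<csize pr (rP pr)}"
proof (cases "k \<le> csize pr (rP pr)")
  case True
  then show ?thesis using gain_at_nonneg[OF v] by (intro sum_mono2) auto
next
  case False
  then have "sum (gain_at pr) {..<k}
      = sum (gain_at pr) {..<csize pr (rP pr)} + sum (gain_at pr) {csize pr (rP pr)..<k}"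
    using sum.atLeastLessThan_concat[of 0 "csize pr (rP pr)" k "gain_at pr"]
    by (simp add: atLeast0LessThan)
  moreover have "sum (gain_at pr) {csize pr (rP pr)..<k} \<le> 0"
    using gain_at_nonpos[OF v] k by (intro sum_nonpos) auto
  ultimately show ?thesis by simp
qed

lemma gft_le_canonical_gain:
  assumes v: "valid_prof K pr" and tm: "\<forall>m\<in>Ms K. truthful_med K c pr m"
    and ta: "\<forall>a\<in>As K. truthful_adv vt pr a" and S: "is_assignment K S"
  shows "gft c vt S \<le> sum (gain_at pr) {..<csize pr (rP pr)}"
proof -
  note tf = truthful_profile[OF v tm ta]
  have Ssub: "S \<subseteq> Us K \<times> all_slots" and injf: "inj_on fst S" and injs: "inj_on snd S"
    using S unfolding is_assignment_def inj_on_def by blast+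
  define k where "k = card S"
  have cf: "card (fst ` S) = k" and cs: "card (snd ` S) = k" using card_image injf injs k_def
    by auto
  have fsub: "fst ` S \<subseteq> rP pr" and ssub: "snd ` S \<subseteq> all_slots" using Ssub tf(1)
    by auto
  have "gft c vt S = (\<Sum>x\<in>S. rv pr (fst (snd x)) - rc pr (fst x))"
    unfolding gft_def using Ssub tf mem_all_slots_iff by (intro sum.cong) auto
  also have "\<dots> = (\<Sum>b\<in>snd ` S. rv pr (fst b)) - (\<Sum>p\<in>fst ` S. rc pr p)"
    by (simp add: sum_subtractf sum.reindex[OF injs] sum.reindex[OF injf])
  also have "\<dots> \<le> (\<Sum>i<k. rv pr (fst (slot_at pr i))) - (\<Sum>i<k. rc pr (user_at pr i))"
    using sum_values_le_top_slots[OF ssub cs, where pr=pr] sum_costs_ge_cheapest[OF v fsub cf]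
    by linarith
  also have "\<dots> = sum (gain_at pr) {..<k}" unfolding gain_at_def by (simp add: sum_subtractf)
  also have "\<dots> \<le> sum (gain_at pr) {..<csize pr (rP pr)}"
    using sum_gain_at_le_csize[OF v] card_mono[OF finite_reported[OF v] fsub]
      card_mono[OF finite_all_slots ssub] cf cs by simp
  finally show ?thesis .
qed

lemma finite_assignments: "finite {S. is_assignment K S}"
proof -
  have "{S. is_assignment K S} \<subseteq> Pow (Us K \<times> all_slots)"
    unfolding is_assignment_def by auto
  then show ?thesis using finite_users finite_all_slots finite_subset
    by (metis finite_Pow_iff finite_SigmaI)
qed

lemma opt_gft_bounds:
  assumes v: "valid_prof K pr" and tm: "\<forall>m\<in>Ms K. truthful_med K c pr m"
    and ta: "\<forall>a\<in>As K. truthful_adv vt pr a"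
  shows "0 \<le> opt_gft K c vt" "opt_gft K c vt \<le> sum (gain_at pr) {..<csize pr (rP pr)}"
proof -
  have e: "is_assignment K {}" unfolding is_assignment_def by simp
  show "0 \<le> opt_gft K c vt"
    unfolding opt_gft_def using e finite_assignments
    by (intro Max_ge_iff[THEN iffD2]) (auto simp: gft_def intro!: bexI[of _ "{}"])
  show "opt_gft K c vt \<le> sum (gain_at pr) {..<csize pr (rP pr)}"
    unfolding opt_gft_def using e finite_assignments gft_le_canonical_gain[OF v tm ta]
    by (subst Max_le_iff) auto
qed

lemma cheap_user_in_items:
  assumes v: "valid_prof K pr" and p: "p \<in> rP pr"
    and r: "urank pr (rP pr) p < csize pr (rP pr) - 5 * \<gamma>"
  shows "p \<in> items K pr"
proof -
  define m where "m = med K p"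
  have pU: "p \<in> Us K" using p reported_subset_users[OF v] by blast
  have m: "m \<in> Ms K" and pm: "p \<in> usersof K m"
    using med_in_mediators[OF pU] pU unfolding m_def usersof_def by auto
  have L: "csize pr (rP pr) \<le> csize pr (Pminus pr m) + \<gamma>"
    using csize_le_remove[OF v Pminus_subset subset_refl card_reported_Diff_Pminus[OF m]] by simp
  then have "4 * \<gamma> < csize pr (Pminus pr m)" using r by linarith
  then obtain q where q: "pm K pr m = Some q" using pm_None[OF v, of m] by (cases "pm K pr m") auto
  have qP: "q \<in> Pminus pr m" and qr: "urank pr (Pminus pr m) q = csize pr (Pminus pr m) - 4 * \<gamma> - 1"
    using pm_Some[OF v q] by auto
  have "user_key pr p < user_key pr q"
  proof (rule ccontr)
    assume "\<not> ?thesis"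
    moreover have "user_key pr p \<noteq> user_key pr q"
      using inj_onD[OF inj_on_user_key[OF v]] p qP pm by blast
    ultimately have lt: "user_key pr q < user_key pr p" by simp
    have "urank pr (Pminus pr m) q \<le> urank pr (rP pr) q"
      using key_rank_subset_le[OF finite_reported[OF v] Pminus_subset] .
    also have "\<dots> < urank pr (rP pr) p" using key_rank_less[OF finite_reported[OF v] _ p lt] qP
      by blast
    finally show False using qr r L by linarith
  qed
  then have "user_less K pr p q" using user_less_iff pU qP reported_subset_users[OF v] by blast
  then have "p \<in> hatP K pr m" unfolding hatP_Some[OF q] using p pm by simp
  then show ?thesis unfolding items_def using m by blast
qed

lemma assign_on_cheap_users:
  assumes v: "valid_prof K pr" and k0: "k0 = csize pr (rP pr) - 5 * \<gamma>"
  shows "{x\<in>assign K pr. urank pr (rP pr) (fst x) < k0}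
      = (\<lambda>i. (user_at pr i, slot_at pr i)) ` {..<k0}"
proof -
  have k0P: "k0 \<le> card (rP pr)" "k0 \<le> card all_slots" using csize_le_cards[OF v] k0 by auto
  define U0 where "U0 = {p\<in>rP pr. urank pr (rP pr) p < k0}"
  have U0I: "U0 \<subseteq> items K pr" unfolding U0_def using cheap_user_in_items[OF v] k0 by blast
  have "k0 = card U0"
    unfolding U0_def
    using card_key_rank_less[OF finite_reported[OF v] inj_on_user_key[OF v] k0P(1)] ..
  then have nk: "k0 \<le> nitems K pr" unfolding nitems_def
    using card_mono[OF finite_items[OF v] U0I] by simp
  have ur: "urank pr (items K pr) p = urank pr (rP pr) p" if p: "p \<in> U0" for p
  proof (rule key_rank_cong_downset[OF items_subset])
    fix y assume y: "y \<in> rP pr" "user_key pr y < user_key pr p"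
    then have "y \<in> U0" using key_rank_less[OF finite_reported[OF v] y(1) _ y(2)] p U0_def
      by auto
    then show "y \<in> items K pr" using U0I by blast
  qed
  show ?thesis
  proof (intro equalityI subsetI)
    fix x assume "x \<in> (\<lambda>i. (user_at pr i, slot_at pr i)) ` {..<k0}"
    then obtain i where i: "i < k0" "x = (user_at pr i, slot_at pr i)" by auto
    have u: "user_at pr i \<in> U0" "urank pr (rP pr) (user_at pr i) = i"
      using user_at[OF v] i k0P U0_def by auto
    have "slot_at pr i \<in> win_slots pr" "srank pr (slot_at pr i) = i"
      unfolding win_slots_def using slot_at[of i pr] i k0P nk by auto
    then show "x \<in> {x\<in>assign K pr. urank pr (rP pr) (fst x) < k0}"
      unfolding assign_eq_key_rank[OF v] using U0I u ur[OF u(1)] i by auto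
  next
    fix x assume x: "x \<in> {x\<in>assign K pr. urank pr (rP pr) (fst x) < k0}"
    obtain p b where pb: "x = (p,b)" by (cases x)
    have p: "p \<in> U0" and b: "b \<in> win_slots pr" "urank pr (items K pr) p = srank pr b"
      using x pb assign_eq_key_rank[OF v] items_subset U0_def by auto
    define i where "i = urank pr (rP pr) p"
    have "user_at pr i = p" using user_at_urank[OF v] p U0_def i_def by auto
    moreover have "slot_at pr i = b"
      using slot_at_key_rank[of b pr] b win_slots_subset ur[OF p] i_def by auto
    moreover have "i < k0" using p U0_def i_def by auto
    ultimately show "x \<in> (\<lambda>i. (user_at pr i, slot_at pr i)) ` {..<k0}" using pb by auto
  qed
qed

lemma canonical_prefix_le_gft:
  assumes v: "valid_prof K pr" and tm: "\<forall>m\<in>Ms K. truthful_med K c pr m"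
    and ta: "\<forall>a\<in>As K. truthful_adv vt pr a"
  shows "sum (gain_at pr) {..<csize pr (rP pr) - 5 * \<gamma>} \<le> gft c vt (assign K pr)"
proof -
  note tf = truthful_profile[OF v tm ta]
  define k0 where "k0 = csize pr (rP pr) - 5 * \<gamma>"
  define A where "A = {x\<in>assign K pr. urank pr (rP pr) (fst x) < k0}"
  have k0P: "k0 \<le> card (rP pr)" "k0 \<le> card all_slots" using csize_le_cards[OF v] k0_def
    by auto
  have inj: "inj_on (\<lambda>i. (user_at pr i, slot_at pr i)) {..<k0}"
    using inj_on_user_at[OF v k0P(1)] unfolding inj_on_def by auto
  have "gft c vt A = (\<Sum>i<k0. vt (fst (slot_at pr i)) - c (user_at pr i))"
    unfolding gft_def A_def assign_on_cheap_users[OF v k0_def] sum.reindex[OF inj] by simp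
  also have "\<dots> = sum (gain_at pr) {..<k0}"
    unfolding gain_at_def using user_at[OF v] slot_at[of _ pr] k0P tf mem_all_slots_iff
    by (intro sum.cong) auto
  finally have "gft c vt A = sum (gain_at pr) {..<k0}" .
  moreover have "gft c vt A \<le> gft c vt (assign K pr)"
    unfolding gft_def A_def using finite_assign[OF v] assign_gain_nonneg[OF v tm ta]
    by (intro sum_mono2) auto
  ultimately show ?thesis unfolding k0_def by simp
qed

lemma competitive_profile:
  assumes v: "valid_prof K pr" and tm: "\<forall>m\<in>Ms K. truthful_med K c pr m"
    and ta: "\<forall>a\<in>As K. truthful_adv vt pr a"
  shows "(1 - real (5 * \<gamma>) / real (csize pr (rP pr))) * opt_gft K c vt \<le> gft c vt (assign K pr)"
proof -
  define \<tau> where "\<tau> = csize pr (rP pr)"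
  note opt = opt_gft_bounds[OF v tm ta, folded \<tau>_def]
  have gft0: "0 \<le> gft c vt (assign K pr)"
    unfolding gft_def using assign_gain_nonneg[OF v tm ta] by (intro sum_nonneg) auto
  show ?thesis
  proof (cases "5 * \<gamma> < \<tau>")
    case False
    have "(1 - real (5 * \<gamma>) / real \<tau>) * opt_gft K c vt \<le> 0"
    proof (cases "\<tau> = 0")
      case True
      then show ?thesis using opt(2) by simp
    next
      case False
      then have "1 - real (5 * \<gamma>) / real \<tau> \<le> 0"
        using \<open>\<not> 5 * \<gamma> < \<tau>\<close> by (simp add: field_simps)
      then show ?thesis using opt(1) by (simp add: mult_nonpos_nonneg)
    qed
    then show ?thesis using gft0 \<tau>_def by simp
  next
    case True
    define k0 where "k0 = \<tau> - 5 * \<gamma>"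
    have ratio: "1 - real (5 * \<gamma>) / real \<tau> = real k0 / real \<tau>"
      using True k0_def by (simp add: field_simps of_nat_diff)
    have "real k0 * sum (gain_at pr) {..<\<tau>} \<le> real \<tau> * sum (gain_at pr) {..<k0}"
      using nonincreasing_prefix_mean_ge[of \<tau> "gain_at pr" k0] gain_at_antimono[OF v] \<tau>_def k0_def
      by auto
    then have "real k0 / real \<tau> * sum (gain_at pr) {..<\<tau>} \<le> sum (gain_at pr) {..<k0}"
      using True by (simp add: field_simps)
    moreover have "real k0 / real \<tau> * opt_gft K c vt \<le> real k0 / real \<tau> * sum (gain_at pr) {..<\<tau>}"
      using opt(2) by (intro mult_left_mono) auto
    ultimately show ?thesis
      using canonical_prefix_le_gft[OF v tm ta] ratio \<tau>_def k0_def by simp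
  qed
qed

end

theorem theorem1:
  fixes K :: "('u,'m,'a) mkt" and c :: "'u \<Rightarrow> real" and v :: "'a \<Rightarrow> real"
  assumes "wf_mkt K"
    and "1 \<le> gam K"
    and "\<forall>a\<in>As K. cap K a \<le> gam K"
    and "\<forall>m\<in>Ms K. card (usersof K m) \<le> gam K"
    and "\<forall>p\<in>Us K. 0 \<le> c p"
    and "\<forall>a\<in>As K. 0 \<le> v a"
  shows "budget_balanced K \<and> individually_rational K c v \<and> incentive_compatible K c v \<and>
         competitive K c v (\<lambda>pr. 1 - real (5 * gam K) /
                  real (card (canon K pr (rP pr) (slots K (As K)))))"
proof -
  \<comment> \<open>Neither \<open>1 \<le> gam K\<close> nor the signs of the true costs and values are needed.\<close>
  interpret prm_market K using assms(1,3,4) by unfold_locales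
  have BB: "budget_balanced K" unfolding budget_balanced_def using budget_balanced_profile by blast
  have IR: "individually_rational K c v" unfolding individually_rational_def
    using adv_util_nonneg med_util_nonneg unfolding truthful_adv_def by blast
  have IC: "incentive_compatible K c v" unfolding incentive_compatible_def
    using adv_util_truthful_ge med_util_truthful_ge by blast
  have CO: "competitive K c v (\<lambda>pr. 1 - real (5 * gam K) /
                  real (card (canon K pr (rP pr) (slots K (As K)))))"
    unfolding competitive_def using competitive_profile by blast
  show ?thesis using BB IR IC CO by blast
qed

end
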